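(* Let $(\Omega,\Sigma,\mu;\phi)$ be a bimeasurable measure preserving dynamical system and let $P$ be its Perron-Frobenius operator on $L^1(\Omega,\Sigma,\mu)$. Then the following assertions are equivalent. (i) For all $A\in \Sigma$ the sequence $(\phi^{n}(A))_{n\in\mathbb{N}}$ converges in the measure algebra $\Sigma/\sim$. (ii) For all $f\in L^1(\Omega,\Sigma,\mu)$ the sequence $(P^nf)_{n\in\mathbb{N}}$ converges in $L^1(\Omega,\Sigma,\mu)$. (iii) $\overline{\Sigma_\infty} = \overline{\Sigma_{\mathrm{inv}}}$. Moreover, if these equivalent assertions hold, then for each $f\in L^1(\Omega,\Sigma,\mu)$ the sequence $(P^nf)_{n\in\mathbb{N}}$ converges to $\mathbb{E}(f\mid \Sigma_{\mathrm{inv}})$, and for each $A\in\Sigma$ the sequence $(\phi^n(A))_{n\in\mathbb{N}}$ converges in $\Sigma/\sim$ to the minimal invariant superset $A^*$.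
   Context: A measure preserving dynamical system $(\Omega,\Sigma,\mu;\phi)$ is a probability space $(\Omega,\Sigma,\mu)$ with a measurable map $\phi\colon\Omega\to\Omega$ such that $\mu(\phi^{-1}(A))=\mu(A)$ for all $A\in\Sigma$. It is bimeasurable if $\phi^{-1}(A)\in\Sigma$ and $\phi(A)\in\Sigma$ for all $A\in\Sigma$. The Perron-Frobenius operator $P$ is the unique linear positive operator on $L^1(\Omega,\Sigma,\mu)$ with $\int_A Pf\,d\mu=\int_{\phi^{-1}(A)}f\,d\mu$ for all $f\in L^1$, $A\in\Sigma$. On $\Sigma$ write $A\sim B$ iff $\mu(A\triangle B)=0$; the measure algebra $\Sigma/\sim$ is the set of equivalence classes with metric $d(A,B)=\mu(A\triangle B)$ (sets are identified with their classes). Let $\Sigma_n=\{\phi^{-n}(A):A\in\Sigma\}$, $\Sigma_\infty=\bigcap_{n\in\mathbb{N}}\Sigma_n$, and $\Sigma_{\mathrm{inv}}=\{A\in\Sigma:\phi^{-1}(A)=A\}$. For a sub-$\sigma$-algebra $\mathcal{G}\subseteq\Sigma$, its completion within $\Sigma$ is $\overline{\mathcal{G}}=\{A\in\Sigma: \exists B\in\mathcal{G},\ \mu(A\triangle B)=0\}$. $\mathbb{E}(f\mid\Sigma_{\mathrm{inv}})$ denotes the conditional expectation of $f$ with respect to $\Sigma_{\mathrm{inv}}$. For $A\subseteq\Omega$, the minimal invariant superset $A^*$ is the intersection of all sets $B\subseteq\Omega$ with $A\subseteq B$ and $\phi^{-1}(B)=B$ (for bimeasurable $\phi$ and $A\in\Sigma$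 this set lies in $\Sigma$). *)

theory Defs
  imports "HOL-Probability.Probability"
begin

definition mpds :: "'a measure \<Rightarrow> ('a \<Rightarrow> 'a) \<Rightarrow> bool" where
  "mpds M \<phi> \<longleftrightarrow> prob_space M \<and> \<phi> \<in> M \<rightarrow>\<^sub>M M \<and>
     (\<forall>A\<in>sets M. emeasure M (\<phi> -` A \<inter> space M) = emeasure M A)"

definition bimeasurable :: "'a measure \<Rightarrow> ('a \<Rightarrow> 'a) \<Rightarrow> bool" where
  "bimeasurable M \<phi> \<longleftrightarrow> (\<forall>A\<in>sets M. \<phi> -` A \<inter> space M \<in> sets M \<and> \<phi> ` A \<in> sets M)"

text \<open>Perron-Frobenius operator, given by its defining identity on L^1 (which determines P f a.e.).\<close>
definition perron_frobenius :: "'a measure \<Rightarrow> ('a \<Rightarrow> 'a) \<Rightarrow> (('a \<Rightarrow> real) \<Rightarrow> ('a \<Rightarrow> real)) \<Rightarrow> bool" where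
  "perron_frobenius M \<phi> P \<longleftrightarrow> (\<forall>f. integrable M f \<longrightarrow> integrable M (P f) \<and>
     (\<forall>A\<in>sets M. (\<integral>x\<in>A. P f x \<partial>M) = (\<integral>x\<in>(\<phi> -` A \<inter> space M). f x \<partial>M)))"

definition conv_measure_algebra :: "'a measure \<Rightarrow> (nat \<Rightarrow> 'a set) \<Rightarrow> 'a set \<Rightarrow> bool" where
  "conv_measure_algebra M S B \<longleftrightarrow> B \<in> sets M \<and>
     (\<lambda>n. measure M ((S n - B) \<union> (B - S n))) \<longlonglongrightarrow> 0"

definition conv_L1 :: "'a measure \<Rightarrow> (nat \<Rightarrow> 'a \<Rightarrow> real) \<Rightarrow> ('a \<Rightarrow> real) \<Rightarrow> bool" where
  "conv_L1 M F g \<longleftrightarrow> integrable M g \<and> (\<lambda>n. \<integral>x. \<bar>F n x - g x\<bar> \<partial>M) \<longlonglongrightarrow> 0"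

definition Sigma_n :: "'a measure \<Rightarrow> ('a \<Rightarrow> 'a) \<Rightarrow> nat \<Rightarrow> 'a set set" where
  "Sigma_n M \<phi> n = {(\<phi> ^^ n) -` A \<inter> space M | A. A \<in> sets M}"

definition Sigma_infty :: "'a measure \<Rightarrow> ('a \<Rightarrow> 'a) \<Rightarrow> 'a set set" where
  "Sigma_infty M \<phi> = (\<Inter>n. Sigma_n M \<phi> n)"

definition Sigma_inv :: "'a measure \<Rightarrow> ('a \<Rightarrow> 'a) \<Rightarrow> 'a set set" where
  "Sigma_inv M \<phi> = {A \<in> sets M. \<phi> -` A \<inter> space M = A}"

definition completion_within :: "'a measure \<Rightarrow> 'a set set \<Rightarrow> 'a set set" where
  "completion_within M G = {A \<in> sets M. \<exists>B\<in>G. measure M ((A - B) \<union> (B - A)) = 0}"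

definition min_inv_superset :: "'a measure \<Rightarrow> ('a \<Rightarrow> 'a) \<Rightarrow> 'a set \<Rightarrow> 'a set" where
  "min_inv_superset M \<phi> A = \<Inter>{B. B \<subseteq> space M \<and> A \<subseteq> B \<and> \<phi> -` B \<inter> space M = B}"

end

theory Submission
  imports Defs
begin

text \<open>
  With \<open>\<Sigma>\<^sub>n = \<phi>\<^sup>-\<^sup>n(\<Sigma>)\<close>, the defining identity of \<open>P\<close> gives \<open>E(f | \<Sigma>\<^sub>n) = (P\<^sup>n f) \<circ> \<phi>\<^sup>n\<close>, and composing
  with \<open>\<phi>\<^sup>n\<close> preserves \<open>L\<^sup>1\<close> distances. The \<open>\<Sigma>\<^sub>n\<close> decrease, so \<open>E(f | \<Sigma>\<^sub>n)\<close> converges in \<open>L\<^sup>1\<close>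
  (reverse martingale convergence, proved for bounded \<open>f\<close> by the \<open>L\<^sup>2\<close> argument) to a
  \<open>\<Sigma>\<^sub>\<infinity>\<close>-measurable limit, which is \<open>E(f | \<Sigma>\<^sub>i\<^sub>n\<^sub>v)\<close> when \<open>\<Sigma>\<^sub>\<infinity>\<close> and \<open>\<Sigma>\<^sub>i\<^sub>n\<^sub>v\<close> agree up to null sets.
  As \<open>P\<^sup>n\<close> and \<open>E(\<cdot> | \<Sigma>\<^sub>i\<^sub>n\<^sub>v)\<close> are \<open>L\<^sup>1\<close> contractions, this extends to all integrable \<open>f\<close>.

  Conversely, a set \<open>A = \<phi>\<^sup>-\<^sup>n(B\<^sub>n)\<close> in \<open>\<Sigma>\<^sub>\<infinity>\<close> has \<open>P\<^sup>n 1\<^sub>A = 1\<^sub>B\<^sub>n\<close>, and \<open>\<phi>\<^sup>n(A)\<close> differs from \<open>B\<^sub>n\<close>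
  by a null set. Under (i) or (ii) the indicators \<open>1\<^sub>B\<^sub>n\<close> therefore converge in \<open>L\<^sup>1\<close> to some \<open>G\<close>,
  so \<open>1\<^sub>A\<close> is approximated by \<open>G \<circ> \<phi>\<^sup>n\<close>; this forces \<open>1\<^sub>A \<circ> \<phi> = 1\<^sub>A\<close> a.e., and an almost invariant
  set is a.e. equal to an invariant one.

  Finally, if \<open>P\<^sup>j 1\<^sub>D \<rightarrow> E(1\<^sub>D | \<Sigma>\<^sub>i\<^sub>n\<^sub>v)\<close>, a limit positive a.e. on \<open>D\<close> while \<open>P\<^sup>j 1\<^sub>D\<close> vanishes off
  \<open>\<phi>\<^sup>j(D)\<close>, then \<open>\<mu>(D - \<phi>\<^sup>j(D)) \<rightarrow> 0\<close>. Applied to the sets \<open>\<phi>\<^sup>-\<^sup>m(\<phi>\<^sup>k(A))\<close>, whose union is \<open>A\<^sup>*\<close>,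
  this gives \<open>\<phi>\<^sup>n(A) \<rightarrow> A\<^sup>*\<close>.
\<close>

lemma integrable_indicator_mult_real [intro]:
  fixes f :: "'a \<Rightarrow> real"
  shows "A \<in> sets M \<Longrightarrow> integrable M f \<Longrightarrow> integrable M (\<lambda>x. indicator A x * f x)"
  using integrable_mult_indicator[of A M f] by simp

lemma (in finite_measure) integrable_indicator_finite [intro]:
  "A \<in> sets M \<Longrightarrow> integrable M (indicator A :: 'a \<Rightarrow> real)"
  by (simp add: less_top[symmetric])

lemma (in finite_measure) null_setsI_measure_eq_0:
  "A \<in> sets M \<Longrightarrow> measure M A = 0 \<Longrightarrow> A \<in> null_sets M"
  by (simp add: emeasure_eq_measure null_sets_def)

lemma set_integral_indicator_real:
  "C \<in> sets M \<Longrightarrow> D \<in> sets M \<Longrightarrow> (\<integral>x\<in>C. indicator D x \<partial>M) = measure M (C \<inter> D)"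
  unfolding set_lebesgue_integral_def using sets.sets_into_space[of C M]
  by (simp add: indicator_inter_arith[symmetric] Int_absorb2 Int_assoc[symmetric] Int_commute)

lemma integral_indicator_sym_diff:
  "A \<in> sets M \<Longrightarrow> B \<in> sets M \<Longrightarrow>
    (\<integral>x. \<bar>indicator A x - indicator B x\<bar> \<partial>M :: real) = measure M ((A - B) \<union> (B - A))"
proof -
  assume "A \<in> sets M" "B \<in> sets M"
  then have "(A - B) \<union> (B - A) \<in> sets M" by auto
  have "(\<integral>x. \<bar>indicator A x - indicator B x\<bar> \<partial>M :: real) = (\<integral>x. indicator ((A - B) \<union> (B - A)) x \<partial>M)"
    by (rule Bochner_Integration.integral_cong) (auto simp: indicator_def)
  also have "\<dots> = measure M ((A - B) \<union> (B - A))"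
    using \<open>(A - B) \<union> (B - A) \<in> sets M\<close> sets.sets_into_space by (simp add: Int_absorb2)
  finally show ?thesis .
qed

lemma integral_abs_le_of_set_integrals_eq:
  fixes w v :: "'a \<Rightarrow> real"
  assumes w: "integrable M w" and v: "integrable M v" and X: "X \<in> sets M"
    and B: "B = {x\<in>space M. 0 \<le> w x}"
    and on_B: "(\<integral>x\<in>B. w x \<partial>M) = (\<integral>x\<in>X. v x \<partial>M)"
    and off_B: "(\<integral>x\<in>space M - B. w x \<partial>M) = (\<integral>x\<in>space M - X. v x \<partial>M)"
  shows "(\<integral>x. \<bar>w x\<bar> \<partial>M) \<le> (\<integral>x. \<bar>v x\<bar> \<partial>M)"
proof -
  have B_sets: "B \<in> sets M" unfolding B using w by measurable
  have "(\<integral>x. \<bar>w x\<bar> \<partial>M) = (\<integral>x. indicator B x * w x - indicator (space M - B) x * w x \<partial>M)"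
    by (rule Bochner_Integration.integral_cong) (auto simp: B indicator_def)
  also have "\<dots> = (\<integral>x\<in>B. w x \<partial>M) - (\<integral>x\<in>space M - B. w x \<partial>M)"
    unfolding set_lebesgue_integral_def using B_sets w
    by (simp add: integral_diff integrable_indicator_mult_real sets.compl_sets)
  also have "\<dots> = (\<integral>x\<in>X. v x \<partial>M) - (\<integral>x\<in>space M - X. v x \<partial>M)"
    using on_B off_B by simp
  also have "\<dots> = (\<integral>x. indicator X x * v x - indicator (space M - X) x * v x \<partial>M)"
    unfolding set_lebesgue_integral_def using X v
    by (simp add: integral_diff integrable_indicator_mult_real sets.compl_sets)
  also have "\<dots> \<le> (\<integral>x. \<bar>v x\<bar> \<partial>M)"
    using X v by (intro integral_mono Bochner_Integration.integrable_diff integrable_indicator_mult_real)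
      (auto simp: indicator_def sets.compl_sets)
  finally show ?thesis .
qed

lemma integral_abs_diff_triangle:
  fixes f g h :: "'a \<Rightarrow> real"
  assumes "integrable M f" "integrable M g" "integrable M h"
  shows "(\<integral>x. \<bar>f x - h x\<bar> \<partial>M) \<le> (\<integral>x. \<bar>f x - g x\<bar> \<partial>M) + (\<integral>x. \<bar>g x - h x\<bar> \<partial>M)"
proof -
  have "(\<integral>x. \<bar>f x - h x\<bar> \<partial>M) \<le> (\<integral>x. \<bar>f x - g x\<bar> + \<bar>g x - h x\<bar> \<partial>M)"
    by (rule integral_mono) (use assms in auto)
  also have "\<dots> = (\<integral>x. \<bar>f x - g x\<bar> \<partial>M) + (\<integral>x. \<bar>g x - h x\<bar> \<partial>M)"
    by (rule Bochner_Integration.integral_add) (use assms in auto)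
  finally show ?thesis .
qed

lemma (in prob_space) integral_abs_le_sqrt_integral_square:
  fixes u :: "'a \<Rightarrow> real"
  assumes "integrable M u" and "integrable M (\<lambda>x. (u x)\<^sup>2)"
  shows "(\<integral>x. \<bar>u x\<bar> \<partial>M) \<le> sqrt (\<integral>x. (u x)\<^sup>2 \<partial>M)"
proof -
  have "0 \<le> variance (\<lambda>x. \<bar>u x\<bar>)" by (rule variance_positive)
  also have "variance (\<lambda>x. \<bar>u x\<bar>) = (\<integral>x. (u x)\<^sup>2 \<partial>M) - (\<integral>x. \<bar>u x\<bar> \<partial>M)\<^sup>2"
    using assms by (subst variance_eq) auto
  finally show ?thesis by (intro real_le_rsqrt) simp
qed

lemma (in finite_measure) sigma_finite_subalgebra_of_subalgebra:
  "subalgebra M F \<Longrightarrow> sigma_finite_subalgebra M F"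
  by (intro finite_measure_subalgebra_is_sigma_finite)
    (simp add: finite_measure_subalgebra_def finite_measure_subalgebra_axioms_def finite_measure_axioms)

lemma (in finite_measure) AE_abs_real_cond_exp_le:
  fixes f :: "'a \<Rightarrow> real"
  assumes F: "subalgebra M F" and f: "f \<in> borel_measurable M" "\<And>x. x \<in> space M \<Longrightarrow> \<bar>f x\<bar> \<le> c"
  shows "AE x in M. \<bar>real_cond_exp M F f x\<bar> \<le> c"
proof -
  interpret sigma_finite_subalgebra M F by (rule sigma_finite_subalgebra_of_subalgebra[OF F])
  have fi: "integrable M f" using f by (intro integrable_const_bound[where B=c]) auto
  have "AE x in M. real_cond_exp M F f x \<le> c"
    by (rule real_cond_exp_le_c[OF fi]) (use f abs_le_D1 in auto)
  moreover have "AE x in M. -c \<le> real_cond_exp M F f x"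
    by (rule real_cond_exp_ge_c[OF fi]) (use f abs_le_D2 in force)
  ultimately show ?thesis by eventually_elim auto
qed

text \<open>Since \<open>E(f | G) = E(E(f | F) | G)\<close>, the cross term \<open>\<integral> E(f | F) E(f | G)\<close> equals \<open>\<integral> E(f | G)\<^sup>2\<close>.\<close>
lemma (in finite_measure) integral_square_real_cond_exp_diff:
  fixes f :: "'a \<Rightarrow> real"
  assumes F: "subalgebra M F" and G: "subalgebra F G"
    and f: "f \<in> borel_measurable M" "\<And>x. x \<in> space M \<Longrightarrow> \<bar>f x\<bar> \<le> c"
  shows "(\<integral>x. (real_cond_exp M F f x - real_cond_exp M G f x)\<^sup>2 \<partial>M)
    = (\<integral>x. (real_cond_exp M F f x)\<^sup>2 \<partial>M) - (\<integral>x. (real_cond_exp M G f x)\<^sup>2 \<partial>M)"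
proof -
  have MG: "subalgebra M G" using F G by (auto simp: subalgebra_def)
  interpret G: sigma_finite_subalgebra M G by (rule sigma_finite_subalgebra_of_subalgebra[OF MG])
  define u where "u = real_cond_exp M F f"
  define v where "v = real_cond_exp M G f"
  have fi: "integrable M f" using f by (intro integrable_const_bound[where B=c]) auto
  have [measurable]: "u \<in> borel_measurable M" "v \<in> borel_measurable M" "v \<in> borel_measurable G"
    unfolding u_def v_def by simp_all
  have bounded: "AE x in M. \<bar>u x\<bar> \<le> c" "AE x in M. \<bar>v x\<bar> \<le> c"
    unfolding u_def v_def using AE_abs_real_cond_exp_le F MG f by blast+
  have prod_int: "integrable M (\<lambda>x. a x * b x)"
    if "AE x in M. \<bar>a x\<bar> \<le> c" "AE x in M. \<bar>b x\<bar> \<le> c"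
      "a \<in> borel_measurable M" "b \<in> borel_measurable M" for a b
  proof (rule integrable_const_bound[where B="c * c"])
    show "AE x in M. norm (a x * b x) \<le> c * c"
      using that(1,2) by eventually_elim (auto simp: abs_mult intro: mult_mono)
  qed (use that in auto)
  have "(\<integral>x. v x * u x \<partial>M) = (\<integral>x. v x * real_cond_exp M G u x \<partial>M)"
    using G.real_cond_exp_intg(2)[of v u] prod_int bounded by simp
  also have "\<dots> = (\<integral>x. v x * v x \<partial>M)"
  proof (rule integral_cong_AE)
    have "AE x in M. real_cond_exp M G u x = v x"
      unfolding u_def v_def by (rule G.real_cond_exp_nested_subalg[OF F G fi])
    then show "AE x in M. v x * real_cond_exp M G u x = v x * v x" by eventually_elim simp
  qed simp_all
  finally have cross: "(\<integral>x. u x * v x \<partial>M) = (\<integral>x. v x * v x \<partial>M)" by (simp add: mult.commute)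
  have uu: "integrable M (\<lambda>x. u x * u x)" and uv: "integrable M (\<lambda>x. u x * v x)"
    and vv: "integrable M (\<lambda>x. v x * v x)" using prod_int bounded by simp_all
  have "(\<integral>x. (u x - v x)\<^sup>2 \<partial>M) = (\<integral>x. u x * u x - 2 * (u x * v x) + v x * v x \<partial>M)"
    by (rule Bochner_Integration.integral_cong) (simp_all add: power2_eq_square algebra_simps)
  also have "\<dots> = (\<integral>x. u x * u x \<partial>M) - (\<integral>x. v x * v x \<partial>M)"
    using uu uv vv cross by simp
  finally show ?thesis unfolding u_def v_def by (simp add: power2_eq_square)
qed

section \<open>Reverse martingale convergence for bounded functions\<close>

lemma AE_convergent_of_summable_integral_abs_diff:
  fixes X :: "nat \<Rightarrow> 'a \<Rightarrow> real"
  assumes X: "\<And>k. integrable M (X k)"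
    and summable: "summable (\<lambda>k. \<integral>x. \<bar>X (Suc k) x - X k x\<bar> \<partial>M)"
  shows "AE x in M. convergent (\<lambda>k. X k x)"
proof -
  define D where "D k x = \<bar>X (Suc k) x - X k x\<bar>" for k x
  have D_int: "integrable M (D k)" for k unfolding D_def using X by auto
  then have [measurable]: "D k \<in> borel_measurable M" for k by auto
  have "(\<integral>\<^sup>+x. (\<Sum>k. ennreal (D k x)) \<partial>M) = (\<Sum>k. \<integral>\<^sup>+x. ennreal (D k x) \<partial>M)"
    by (rule nn_integral_suminf) measurable
  also have "\<dots> = (\<Sum>k. ennreal (\<integral>x. D k x \<partial>M))"
    by (intro suminf_cong nn_integral_eq_integral D_int) (simp add: D_def)
  also have "\<dots> = ennreal (\<Sum>k. \<integral>x. D k x \<partial>M)"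
    using summable unfolding D_def by (intro suminf_ennreal2) simp_all
  finally have finite: "(\<integral>\<^sup>+x. (\<Sum>k. ennreal (D k x)) \<partial>M) \<noteq> \<infinity>" by simp
  have "AE x in M. (\<Sum>k. ennreal (D k x)) \<noteq> \<infinity>"
    by (rule nn_integral_PInf_AE[OF _ finite]) measurable
  then show ?thesis
  proof eventually_elim
    case (elim x)
    have "summable (\<lambda>k. D k x)"
      by (rule summable_suminf_not_top) (use elim in \<open>simp_all add: D_def\<close>)
    then have "summable (\<lambda>k. X (Suc k) x - X k x)"
      unfolding D_def by (rule summable_rabs_cancel)
    from summable_LIMSEQ[OF this] obtain s where
      "(\<lambda>K. \<Sum>k<K. X (Suc k) x - X k x) \<longlonglongrightarrow> s" by blast
    then have "(\<lambda>K. X K x - X 0 x) \<longlonglongrightarrow> s"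
      by (simp add: sum_lessThan_telescope[of "\<lambda>k. X k x"])
    then have "(\<lambda>K. X K x - X 0 x + X 0 x) \<longlonglongrightarrow> s + X 0 x"
      by (intro tendsto_intros)
    then show ?case by (auto simp: convergent_def)
  qed
qed

lemma integral_abs_diff_le_of_AE_tendsto:
  fixes X :: "nat \<Rightarrow> 'a \<Rightarrow> real"
  assumes X: "\<And>k. integrable M (X k)" and Y: "integrable M Y" and g: "g \<in> borel_measurable M"
    and lim: "AE x in M. (\<lambda>k. X k x) \<longlonglongrightarrow> g x"
    and bound: "\<forall>\<^sub>F k in sequentially. (\<integral>x. \<bar>Y x - X k x\<bar> \<partial>M) \<le> b"
  shows "integrable M g" and "(\<integral>x. \<bar>Y x - g x\<bar> \<partial>M) \<le> b"
proof -
  have [measurable]: "Y \<in> borel_measurable M" "X k \<in> borel_measurable M" for k using X Y by auto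
  have "AE x in M. ennreal \<bar>Y x - g x\<bar> = liminf (\<lambda>k. ennreal \<bar>Y x - X k x\<bar>)"
    using lim
  proof eventually_elim
    case (elim x)
    then have "(\<lambda>k. ennreal \<bar>Y x - X k x\<bar>) \<longlonglongrightarrow> ennreal \<bar>Y x - g x\<bar>" by (intro tendsto_intros)
    then show ?case by (rule lim_imp_Liminf[symmetric, OF trivial_limit_sequentially])
  qed
  then have "(\<integral>\<^sup>+x. ennreal \<bar>Y x - g x\<bar> \<partial>M) = (\<integral>\<^sup>+x. liminf (\<lambda>k. ennreal \<bar>Y x - X k x\<bar>) \<partial>M)"
    by (rule nn_integral_cong_AE)
  also have "\<dots> \<le> liminf (\<lambda>k. \<integral>\<^sup>+x. ennreal \<bar>Y x - X k x\<bar> \<partial>M)"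
    by (intro nn_integral_liminf) simp
  also have "\<dots> \<le> ennreal b"
  proof (rule Liminf_le)
    show "\<forall>\<^sub>F k in sequentially. (\<integral>\<^sup>+x. ennreal \<bar>Y x - X k x\<bar> \<partial>M) \<le> ennreal b"
      using bound
    proof eventually_elim
      case (elim k)
      have "(\<integral>\<^sup>+x. ennreal \<bar>Y x - X k x\<bar> \<partial>M) = ennreal (\<integral>x. \<bar>Y x - X k x\<bar> \<partial>M)"
        by (rule nn_integral_eq_integral) (use X Y in auto)
      with elim show ?case by (simp add: ennreal_leI)
    qed
  qed simp
  finally have Fatou: "(\<integral>\<^sup>+x. ennreal \<bar>Y x - g x\<bar> \<partial>M) \<le> ennreal b" .
  have diff_int: "integrable M (\<lambda>x. Y x - g x)"
    unfolding integrable_iff_bounded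
  proof
    show "(\<lambda>x. Y x - g x) \<in> borel_measurable M" using g by simp
    show "(\<integral>\<^sup>+x. ennreal (norm (Y x - g x)) \<partial>M) < \<infinity>"
      using Fatou by (simp add: order_le_less_trans)
  qed
  then show "integrable M g" using Bochner_Integration.integrable_diff[OF Y diff_int] by simp
  obtain N where "\<forall>k\<ge>N. (\<integral>x. \<bar>Y x - X k x\<bar> \<partial>M) \<le> b"
    using bound unfolding eventually_sequentially by blast
  then have "(\<integral>x. \<bar>Y x - X N x\<bar> \<partial>M) \<le> b" by simp
  moreover have "0 \<le> (\<integral>x. \<bar>Y x - X N x\<bar> \<partial>M)" by (rule Bochner_Integration.integral_nonneg) simp
  ultimately have "0 \<le> b" by linarith
  moreover have "ennreal (\<integral>x. \<bar>Y x - g x\<bar> \<partial>M) \<le> ennreal b"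
    using Fatou diff_int by (subst nn_integral_eq_integral[symmetric]) auto
  ultimately show "(\<integral>x. \<bar>Y x - g x\<bar> \<partial>M) \<le> b" by (simp add: ennreal_le_iff)
qed

text \<open>Completeness of \<open>L\<^sup>1\<close> (Riesz--Fischer): the limit is taken pointwise along a fast subsequence.\<close>
lemma integrable_lim_of_L1_Cauchy:
  fixes E :: "nat \<Rightarrow> 'a \<Rightarrow> real"
  assumes E: "\<And>n. integrable M (E n)" and \<delta>: "\<delta> \<longlonglongrightarrow> 0"
    and Cauchy: "\<And>n m. n \<le> m \<Longrightarrow> (\<integral>x. \<bar>E n x - E m x\<bar> \<partial>M) \<le> \<delta> n"
  obtains r where "strict_mono r" "integrable M (\<lambda>x. lim (\<lambda>k. E (r k) x))"
    "\<And>n. (\<integral>x. \<bar>E n x - lim (\<lambda>k. E (r k) x)\<bar> \<partial>M) \<le> \<delta> n"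
proof -
  have "\<exists>N. \<forall>m\<ge>N. \<delta> m < (1/2)^k" for k :: nat
    using LIMSEQ_D[OF \<delta>, of "(1/2)^k"] by force
  then obtain N where N: "\<And>k m. N k \<le> m \<Longrightarrow> \<delta> m < (1/2)^k" by metis
  define r where "r k = k + (\<Sum>j\<le>k. N j)" for k
  have r: "strict_mono r" unfolding strict_mono_Suc_iff r_def by simp
  have r_N: "\<delta> (r k) < (1/2)^k" for k
    using N member_le_sum[of k "{..k}" N] unfolding r_def by simp
  define g where "g = (\<lambda>x. lim (\<lambda>k. E (r k) x))"
  have g: "g \<in> borel_measurable M"
    unfolding g_def using E by (intro borel_measurable_lim_metric) auto
  have "summable (\<lambda>k. \<integral>x. \<bar>E (r (Suc k)) x - E (r k) x\<bar> \<partial>M)"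
  proof (rule summable_comparison_test'[OF summable_geometric[of "1/2"]])
    show "norm (\<integral>x. \<bar>E (r (Suc k)) x - E (r k) x\<bar> \<partial>M) \<le> (1/2)^k" for k
      using Cauchy[of "r k" "r (Suc k)"] r_N[of k] strict_mono_less_eq[OF r, of k "Suc k"]
      by (simp add: abs_minus_commute)
  qed simp
  then have "AE x in M. convergent (\<lambda>k. E (r k) x)"
    using E by (rule AE_convergent_of_summable_integral_abs_diff[rotated])
  then have g_lim: "AE x in M. (\<lambda>k. E (r k) x) \<longlonglongrightarrow> g x"
    by eventually_elim (simp add: g_def convergent_LIMSEQ_iff)
  have bound: "\<forall>\<^sub>F k in sequentially. (\<integral>x. \<bar>E n x - E (r k) x\<bar> \<partial>M) \<le> \<delta> n" for n
  proof (rule eventually_sequentiallyI)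
    fix k assume "n \<le> k"
    then show "(\<integral>x. \<bar>E n x - E (r k) x\<bar> \<partial>M) \<le> \<delta> n"
      using seq_suble[OF r, of k] by (intro Cauchy) simp
  qed
  show ?thesis
    using that[OF r] integral_abs_diff_le_of_AE_tendsto[OF E E g g_lim bound] unfolding g_def .
qed

lemma lim_ignore_initial_segment: "lim (\<lambda>k. X (k + m)) = (lim X :: real)"
  unfolding lim_def using LIMSEQ_ignore_initial_segment LIMSEQ_offset by metis

lemma set_integral_eq_of_L1_tendsto:
  fixes E :: "nat \<Rightarrow> 'a \<Rightarrow> real"
  assumes E: "\<And>n. integrable M (E n)" and g: "integrable M g" and C: "C \<in> sets M"
    and lim: "(\<lambda>n. \<integral>x. \<bar>E n x - g x\<bar> \<partial>M) \<longlonglongrightarrow> 0"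
    and eq: "\<And>n. (\<integral>x\<in>C. E n x \<partial>M) = c"
  shows "(\<integral>x\<in>C. g x \<partial>M) = c"
proof -
  have "\<bar>c - (\<integral>x\<in>C. g x \<partial>M)\<bar> \<le> (\<integral>x. \<bar>E n x - g x\<bar> \<partial>M)" for n
  proof -
    have "\<bar>c - (\<integral>x\<in>C. g x \<partial>M)\<bar> = \<bar>\<integral>x. indicator C x * (E n x - g x) \<partial>M\<bar>"
      using E g C eq[of n, symmetric]
      by (simp add: set_lebesgue_integral_def right_diff_distrib integrable_indicator_mult_real)
    also have "\<dots> \<le> (\<integral>x. \<bar>indicator C x * (E n x - g x)\<bar> \<partial>M)"
      by (rule integral_abs_bound)
    also have "\<dots> \<le> (\<integral>x. \<bar>E n x - g x\<bar> \<partial>M)"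
      using E g C
      by (intro integral_mono integrable_abs integrable_indicator_mult_real) (auto split: split_indicator)
    finally show ?thesis .
  qed
  then have "\<bar>c - (\<integral>x\<in>C. g x \<partial>M)\<bar> \<le> 0" by (intro LIMSEQ_le_const[OF lim]) auto
  then show ?thesis by simp
qed

text \<open>The \<open>L\<^sup>2\<close> argument behind reverse martingale convergence for bounded \<open>f\<close>: the norms
  \<open>\<parallel>E(f | F n)\<parallel>\<^sub>2\<^sup>2\<close> decrease, and their increments are the squared \<open>L\<^sup>2\<close> distances, which
  dominate the squared \<open>L\<^sup>1\<close> distances.\<close>
lemma (in prob_space) real_cond_exp_decreasing_L1_Cauchy:
  fixes f :: "'a \<Rightarrow> real" and F :: "nat \<Rightarrow> 'a measure"
  assumes F: "\<And>n. subalgebra M (F n)" and dec: "\<And>n m. n \<le> m \<Longrightarrow> subalgebra (F n) (F m)"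
    and f: "f \<in> borel_measurable M" "\<And>x. x \<in> space M \<Longrightarrow> \<bar>f x\<bar> \<le> c"
  shows "\<exists>\<delta>. \<delta> \<longlonglongrightarrow> 0 \<and> (\<forall>n m. n \<le> m \<longrightarrow>
    (\<integral>x. \<bar>real_cond_exp M (F n) f x - real_cond_exp M (F m) f x\<bar> \<partial>M) \<le> \<delta> n)"
proof -
  define E where "E n = real_cond_exp M (F n) f" for n
  have E_int: "integrable M (E n)" for n
    unfolding E_def using sigma_finite_subalgebra.real_cond_exp_int(1)[OF
      sigma_finite_subalgebra_of_subalgebra[OF F] integrable_const_bound[where B=c]] f by auto
  have E_bounded: "AE x in M. \<bar>E n x\<bar> \<le> c" for n
    unfolding E_def using AE_abs_real_cond_exp_le[OF F f] .
  define a where "a n = (\<integral>x. (E n x)\<^sup>2 \<partial>M)" for n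
  have a_diff: "(\<integral>x. (E n x - E m x)\<^sup>2 \<partial>M) = a n - a m" if "n \<le> m" for n m
    unfolding a_def E_def using integral_square_real_cond_exp_diff[OF F dec[OF that] f] .
  have "decseq a"
  proof (rule decseq_SucI)
    fix n
    have "0 \<le> (\<integral>x. (E n x - E (Suc n) x)\<^sup>2 \<partial>M)" by (rule Bochner_Integration.integral_nonneg) simp
    then show "a (Suc n) \<le> a n" using a_diff[of n "Suc n"] by simp
  qed
  moreover have "0 \<le> a n" for n unfolding a_def by (rule Bochner_Integration.integral_nonneg) simp
  ultimately obtain L where a_lim: "a \<longlonglongrightarrow> L" and L_le: "\<And>n. L \<le> a n"
    using decseq_convergent[of a 0] by blast
  define \<delta> where "\<delta> = (\<lambda>n. sqrt (a n - L))"
  have \<delta>_lim: "\<delta> \<longlonglongrightarrow> 0"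
    using tendsto_real_sqrt[OF tendsto_diff[OF a_lim tendsto_const[of L]]] by (simp add: \<delta>_def)
  have Cauchy: "(\<integral>x. \<bar>E n x - E m x\<bar> \<partial>M) \<le> \<delta> n" if "n \<le> m" for n m
  proof -
    have "integrable M (\<lambda>x. (E n x - E m x)\<^sup>2)"
    proof (rule integrable_const_bound[where B="(2 * c)\<^sup>2"])
      show "AE x in M. norm ((E n x - E m x)\<^sup>2) \<le> (2 * c)\<^sup>2"
        using E_bounded[of n] E_bounded[of m]
      proof eventually_elim
        case (elim x)
        then have "\<bar>E n x - E m x\<bar> \<le> 2 * c" using abs_triangle_ineq4[of "E n x" "E m x"] by linarith
        then have "\<bar>E n x - E m x\<bar>\<^sup>2 \<le> (2 * c)\<^sup>2" by (intro power_mono) auto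
        then show ?case by simp
      qed
    qed (use E_int in auto)
    then have "(\<integral>x. \<bar>E n x - E m x\<bar> \<partial>M) \<le> sqrt (a n - a m)"
      using integral_abs_le_sqrt_integral_square[of "\<lambda>x. E n x - E m x"] E_int a_diff[OF that] by simp
    also have "\<dots> \<le> \<delta> n" unfolding \<delta>_def using L_le[of m] by simp
    finally show ?thesis .
  qed
  then show ?thesis using \<delta>_lim unfolding E_def by blast
qed

lemma (in prob_space) real_cond_exp_decreasing_L1_convergent:
  fixes f :: "'a \<Rightarrow> real" and F :: "nat \<Rightarrow> 'a measure"
  assumes F: "\<And>n. subalgebra M (F n)" and dec: "\<And>n m. n \<le> m \<Longrightarrow> subalgebra (F n) (F m)"
    and f: "f \<in> borel_measurable M" "\<And>x. x \<in> space M \<Longrightarrow> \<bar>f x\<bar> \<le> c"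
  obtains g where "\<And>m. g \<in> borel_measurable (F m)" "integrable M g"
    "(\<lambda>n. \<integral>x. \<bar>real_cond_exp M (F n) f x - g x\<bar> \<partial>M) \<longlonglongrightarrow> 0"
    "\<And>C. (\<And>n. C \<in> sets (F n)) \<Longrightarrow> (\<integral>x\<in>C. g x \<partial>M) = (\<integral>x\<in>C. f x \<partial>M)"
proof -
  have f_int: "integrable M f" using f by (intro integrable_const_bound[where B=c]) auto
  define E where "E n = real_cond_exp M (F n) f" for n
  have E_int: "integrable M (E n)" for n
    unfolding E_def using sigma_finite_subalgebra.real_cond_exp_int(1)[OF
      sigma_finite_subalgebra_of_subalgebra[OF F] f_int] .
  obtain \<delta> where \<delta>: "\<delta> \<longlonglongrightarrow> 0" and "\<forall>n m. n \<le> m \<longrightarrow>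
      (\<integral>x. \<bar>real_cond_exp M (F n) f x - real_cond_exp M (F m) f x\<bar> \<partial>M) \<le> \<delta> n"
    using real_cond_exp_decreasing_L1_Cauchy[where F=F, OF F dec f] by blast
  then have Cauchy: "\<And>n m. n \<le> m \<Longrightarrow> (\<integral>x. \<bar>E n x - E m x\<bar> \<partial>M) \<le> \<delta> n"
    unfolding E_def by simp
  obtain r where r: "strict_mono r" and g_int': "integrable M (\<lambda>x. lim (\<lambda>k. E (r k) x))"
    and g_bound': "\<And>n. (\<integral>x. \<bar>E n x - lim (\<lambda>k. E (r k) x)\<bar> \<partial>M) \<le> \<delta> n"
    using integrable_lim_of_L1_Cauchy[OF E_int \<delta> Cauchy] by blast
  define g where "g = (\<lambda>x. lim (\<lambda>k. E (r k) x))"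
  have g_int: "integrable M g" and g_bound: "\<And>n. (\<integral>x. \<bar>E n x - g x\<bar> \<partial>M) \<le> \<delta> n"
    unfolding g_def using g_int' g_bound' by simp_all
  have g_meas: "g \<in> borel_measurable (F m)" for m
  proof -
    have "E (r (k + m)) \<in> borel_measurable (F m)" for k
      unfolding E_def using seq_suble[OF r, of "k + m"]
      by (intro measurable_from_subalg[OF dec borel_measurable_cond_exp]) simp
    then have "(\<lambda>x. lim (\<lambda>k. E (r (k + m)) x)) \<in> borel_measurable (F m)"
      by (rule borel_measurable_lim_metric)
    then show ?thesis
      unfolding g_def using lim_ignore_initial_segment[of "\<lambda>k. E (r k) _" m] by simp
  qed
  have g_conv: "(\<lambda>n. \<integral>x. \<bar>E n x - g x\<bar> \<partial>M) \<longlonglongrightarrow> 0"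
    using g_bound
    by (intro real_tendsto_sandwich[OF _ _ tendsto_const \<delta>]) (auto intro: always_eventually)
  have g_set: "(\<integral>x\<in>C. g x \<partial>M) = (\<integral>x\<in>C. f x \<partial>M)" if C: "\<And>n. C \<in> sets (F n)" for C
  proof (rule set_integral_eq_of_L1_tendsto[OF E_int g_int _ g_conv])
    show "C \<in> sets M" using C[of 0] F[of 0] by (auto simp: subalgebra_def)
    show "(\<integral>x\<in>C. E n x \<partial>M) = (\<integral>x\<in>C. f x \<partial>M)" for n unfolding E_def
      by (rule sigma_finite_subalgebra.real_cond_exp_intA[OF
        sigma_finite_subalgebra_of_subalgebra[OF F] f_int C, symmetric])
  qed
  show ?thesis using that[OF g_meas g_int g_conv[unfolded E_def] g_set] .
qed

lemma tendsto_integral_abs_diff_truncation: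
  fixes f :: "'a \<Rightarrow> real"
  assumes f: "integrable M f"
  shows "(\<lambda>k. \<integral>x. \<bar>f x - max (- real k) (min (real k) (f x))\<bar> \<partial>M) \<longlonglongrightarrow> 0"
proof -
  have "(\<lambda>k. \<integral>x. \<bar>f x - max (- real k) (min (real k) (f x))\<bar> \<partial>M) \<longlonglongrightarrow> (\<integral>x. 0 \<partial>M)"
  proof (rule integral_dominated_convergence[where w="\<lambda>x. \<bar>f x\<bar>"])
    show "AE x in M. (\<lambda>k. \<bar>f x - max (- real k) (min (real k) (f x))\<bar>) \<longlonglongrightarrow> 0"
    proof (rule AE_I2)
      fix x
      obtain K :: nat where K: "\<bar>f x\<bar> \<le> real K" using real_arch_simple by blast
      have "\<bar>f x - max (- real k) (min (real k) (f x))\<bar> = 0" if "K \<le> k" for k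
        using K that by (auto simp: max_def min_def)
      then show "(\<lambda>k. \<bar>f x - max (- real k) (min (real k) (f x))\<bar>) \<longlonglongrightarrow> 0"
        by (intro tendsto_eventually eventually_sequentiallyI[of K]) auto
    qed
    show "AE x in M. norm \<bar>f x - max (- real k) (min (real k) (f x))\<bar> \<le> \<bar>f x\<bar>" for k
      by (rule AE_I2) (auto simp: max_def min_def)
  qed (use f in auto)
  then show ?thesis by simp
qed

lemma (in finite_measure) L1_tendsto_of_contractions:
  fixes T :: "nat \<Rightarrow> ('a \<Rightarrow> real) \<Rightarrow> 'a \<Rightarrow> real" and L :: "('a \<Rightarrow> real) \<Rightarrow> 'a \<Rightarrow> real"
  assumes T_int: "\<And>n h. integrable M h \<Longrightarrow> integrable M (T n h)"
    and L_int: "\<And>h. integrable M h \<Longrightarrow> integrable M (L h)"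
    and T_contr: "\<And>n h h'. integrable M h \<Longrightarrow> integrable M h' \<Longrightarrow>
      (\<integral>x. \<bar>T n h x - T n h' x\<bar> \<partial>M) \<le> (\<integral>x. \<bar>h x - h' x\<bar> \<partial>M)"
    and L_contr: "\<And>h h'. integrable M h \<Longrightarrow> integrable M h' \<Longrightarrow>
      (\<integral>x. \<bar>L h x - L h' x\<bar> \<partial>M) \<le> (\<integral>x. \<bar>h x - h' x\<bar> \<partial>M)"
    and bounded: "\<And>h c. h \<in> borel_measurable M \<Longrightarrow> (\<And>x. x \<in> space M \<Longrightarrow> \<bar>h x\<bar> \<le> c) \<Longrightarrow>
      (\<lambda>n. \<integral>x. \<bar>T n h x - L h x\<bar> \<partial>M) \<longlonglongrightarrow> 0"
    and f: "integrable M f"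
  shows "(\<lambda>n. \<integral>x. \<bar>T n f x - L f x\<bar> \<partial>M) \<longlonglongrightarrow> 0"
proof (rule LIMSEQ_I)
  fix r :: real assume r: "0 < r"
  define tr where "tr k x = max (- real k) (min (real k) (f x))" for k x
  have tr_meas: "tr k \<in> borel_measurable M" for k unfolding tr_def using f by measurable
  have tr_bounded: "\<bar>tr k x\<bar> \<le> real k" for k x unfolding tr_def by auto
  have tr_int: "integrable M (tr k)" for k
    using tr_meas tr_bounded by (intro integrable_const_bound[where B="real k"]) auto
  obtain k where k: "(\<integral>x. \<bar>f x - tr k x\<bar> \<partial>M) < r/3"
    using LIMSEQ_D[OF tendsto_integral_abs_diff_truncation[OF f], of "r/3"] r
    unfolding tr_def by force
  obtain N where N: "\<And>n. N \<le> n \<Longrightarrow> (\<integral>x. \<bar>T n (tr k) x - L (tr k) x\<bar> \<partial>M) < r/3"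
    using LIMSEQ_D[OF bounded[OF tr_meas tr_bounded], of "r/3"] r by force
  show "\<exists>N. \<forall>n\<ge>N. norm ((\<integral>x. \<bar>T n f x - L f x\<bar> \<partial>M) - 0) < r"
  proof (intro exI allI impI)
    fix n assume n: "N \<le> n"
    have "(\<integral>x. \<bar>T n f x - L f x\<bar> \<partial>M)
      \<le> (\<integral>x. \<bar>T n f x - T n (tr k) x\<bar> \<partial>M) + (\<integral>x. \<bar>T n (tr k) x - L f x\<bar> \<partial>M)"
      by (intro integral_abs_diff_triangle T_int L_int f tr_int)
    also have "(\<integral>x. \<bar>T n (tr k) x - L f x\<bar> \<partial>M)
      \<le> (\<integral>x. \<bar>T n (tr k) x - L (tr k) x\<bar> \<partial>M) + (\<integral>x. \<bar>L (tr k) x - L f x\<bar> \<partial>M)"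
      by (intro integral_abs_diff_triangle T_int L_int f tr_int)
    also have "(\<integral>x. \<bar>T n f x - T n (tr k) x\<bar> \<partial>M) \<le> (\<integral>x. \<bar>f x - tr k x\<bar> \<partial>M)"
      using f tr_int by (rule T_contr)
    also have "(\<integral>x. \<bar>L (tr k) x - L f x\<bar> \<partial>M) \<le> (\<integral>x. \<bar>f x - tr k x\<bar> \<partial>M)"
      using L_contr[OF tr_int f] by (simp add: abs_minus_commute)
    finally show "norm ((\<integral>x. \<bar>T n f x - L f x\<bar> \<partial>M) - 0) < r"
      using k N[OF n] by simp
  qed
qed

lemma Union_Union_prod_decode: "(\<Union>m k. D m k) = (\<Union>i. case_prod D (prod_decode i))"
proof (intro set_eqI iffI)
  fix x assume "x \<in> (\<Union>m k. D m k)"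
  then obtain m k where "x \<in> D m k" by blast
  then have "x \<in> case_prod D (prod_decode (prod_encode (m, k)))" by simp
  then show "x \<in> (\<Union>i. case_prod D (prod_decode i))" by (rule UN_I[OF UNIV_I])
next
  fix x assume "x \<in> (\<Union>i. case_prod D (prod_decode i))"
  then obtain i where "x \<in> case_prod D (prod_decode i)" by (rule UN_E) (rule that)
  then obtain m k where "x \<in> D m k" by (cases "prod_decode i") simp
  then show "x \<in> (\<Union>m k. D m k)" by blast
qed

lemma (in finite_measure) measure_Diff_Union_tendsto_0:
  fixes D :: "nat \<Rightarrow> 'a set"
  assumes D: "\<And>i. D i \<in> sets M" and X: "\<And>n. X n \<in> sets M"
    and lim: "\<And>i. (\<lambda>n. measure M (D i - X n)) \<longlonglongrightarrow> 0"
  shows "(\<lambda>n. measure M ((\<Union>i. D i) - X n)) \<longlonglongrightarrow> 0"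
proof (rule LIMSEQ_I)
  fix r :: real assume r: "0 < r"
  define U where "U N = (\<Union>i<N. D i)" for N
  have U: "U N \<in> sets M" for N unfolding U_def using D by auto
  have "incseq U" unfolding U_def incseq_def by (auto intro: order_less_le_trans)
  then have "(\<lambda>N. measure M (U N)) \<longlonglongrightarrow> measure M (\<Union>N. U N)"
    by (intro finite_Lim_measure_incseq) (use U in auto)
  moreover have "(\<Union>N. U N) = (\<Union>i. D i)" unfolding U_def by auto
  ultimately have "(\<lambda>N. measure M (U N)) \<longlonglongrightarrow> measure M (\<Union>i. D i)" by simp
  then obtain N where N: "\<bar>measure M (U N) - measure M (\<Union>i. D i)\<bar> < r/2"
    using LIMSEQ_D[of _ _ "r/2"] r by force
  have "U N \<subseteq> (\<Union>i. D i)" unfolding U_def by auto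
  moreover have "measure M (\<Union>i. D i) - measure M (U N) < r/2"
    using N[unfolded abs_less_iff] by linarith
  ultimately have tail: "measure M ((\<Union>i. D i) - U N) < r/2"
    using finite_measure_Diff[of "\<Union>i. D i" "U N"] D U by auto
  have "(\<lambda>n. \<Sum>i<N. measure M (D i - X n)) \<longlonglongrightarrow> 0" by (rule tendsto_null_sum) (rule lim)
  then obtain n0 where n0: "\<And>n. n0 \<le> n \<Longrightarrow> (\<Sum>i<N. measure M (D i - X n)) < r/2"
    using LIMSEQ_D[of _ 0 "r/2"] r by force
  show "\<exists>n0. \<forall>n\<ge>n0. norm (measure M ((\<Union>i. D i) - X n) - 0) < r"
  proof (intro exI allI impI)
    fix n assume n: "n0 \<le> n"
    have "(\<Union>i. D i) - X n \<subseteq> ((\<Union>i. D i) - U N) \<union> (\<Union>i<N. D i - X n)" unfolding U_def by auto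
    then have "measure M ((\<Union>i. D i) - X n) \<le> measure M (((\<Union>i. D i) - U N) \<union> (\<Union>i<N. D i - X n))"
      by (intro finite_measure_mono) (use D X U in auto)
    also have "\<dots> \<le> measure M ((\<Union>i. D i) - U N) + measure M (\<Union>i<N. D i - X n)"
      by (intro measure_Un_le) (use D X U in auto)
    also have "measure M (\<Union>i<N. D i - X n) \<le> (\<Sum>i<N. measure M (D i - X n))"
      by (intro finite_measure_subadditive_finite) (use D X in auto)
    finally show "norm (measure M ((\<Union>i. D i) - X n) - 0) < r" using tail n0[OF n] by simp
  qed
qed

lemma (in finite_measure) measure_sublevel_tendsto_0:
  fixes h :: "'a \<Rightarrow> real"
  assumes h [measurable]: "h \<in> borel_measurable M" and D: "D \<in> sets M"
    and pos: "AE x in M. x \<in> D \<longrightarrow> 0 < h x"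
  shows "(\<lambda>k. measure M {x \<in> D. h x < 1 / Suc k}) \<longlonglongrightarrow> 0"
proof -
  define Y where "Y k = {x \<in> D. h x < 1 / Suc k}" for k
  have Y: "Y k \<in> sets M" for k unfolding Y_def using D by measurable
  have "decseq Y" unfolding decseq_def Y_def
    by (auto intro: order_less_le_trans[OF _ divide_left_mono])
  then have "(\<lambda>k. measure M (Y k)) \<longlonglongrightarrow> measure M (\<Inter>k. Y k)"
    by (intro finite_Lim_measure_decseq) (use Y in auto)
  moreover have "(\<Inter>k. Y k) = {x \<in> D. h x \<le> 0}"
  proof (intro set_eqI iffI)
    fix x assume x: "x \<in> (\<Inter>k. Y k)"
    have "h x \<le> 0"
    proof (rule ccontr)
      assume "\<not> h x \<le> 0"
      then obtain k where "1 / Suc k < h x" using nat_approx_posE[of "h x"] by auto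
      moreover have "x \<in> Y k" using x by blast
      ultimately show False unfolding Y_def by auto
    qed
    then show "x \<in> {x \<in> D. h x \<le> 0}" using x unfolding Y_def by auto
  qed (auto simp: Y_def intro: order_le_less_trans)
  moreover have "{x \<in> D. h x \<le> 0} \<in> null_sets M"
  proof (subst AE_iff_null_sets)
    show "{x \<in> D. h x \<le> 0} \<in> sets M" using D by measurable
    show "AE x in M. x \<notin> {x \<in> D. h x \<le> 0}" using pos by eventually_elim auto
  qed
  ultimately show ?thesis unfolding Y_def by (simp add: measure_eq_0_null_sets)
qed

lemma (in finite_measure) measure_le_sublevel_plus_set_integral:
  fixes h :: "'a \<Rightarrow> real"
  assumes h: "integrable M h" and D: "D \<in> sets M" and pos: "AE x in M. x \<in> D \<longrightarrow> 0 < h x"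
    and C: "C \<in> sets M" "C \<subseteq> D"
  shows "measure M C \<le> measure M {x \<in> D. h x < 1 / Suc k} + real (Suc k) * (\<integral>x\<in>C. h x \<partial>M)"
proof -
  define Y where "Y = {x \<in> D. h x < 1 / Suc k}"
  have [measurable]: "h \<in> borel_measurable M" using h by auto
  have Y: "Y \<in> sets M" unfolding Y_def using D by measurable
  have "measure M C = (\<integral>x. indicator C x \<partial>M)" using C by simp
  also have "\<dots> \<le> (\<integral>x. indicator Y x + real (Suc k) * (indicator C x * h x) \<partial>M)"
  proof (rule integral_mono_AE)
    show "AE x in M. indicator C x \<le> indicator Y x + real (Suc k) * (indicator C x * h x)"
      using pos
    proof eventually_elim
      case (elim x)
      show ?case
      proof (cases "x \<in> C")
        case True
        with C elim have "x \<in> D" "0 < h x" by auto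
        then show ?thesis
          using True by (cases "h x < 1 / Suc k") (auto simp: Y_def field_simps)
      qed simp
    qed
  next
    show "integrable M (\<lambda>x. indicator Y x + real (Suc k) * (indicator C x * h x))"
      by (intro Bochner_Integration.integrable_add integrable_mult_right
        integrable_indicator_mult_real integrable_indicator_finite C Y h)
  qed (use C in auto)
  also have "\<dots> = measure M Y + real (Suc k) * (\<integral>x\<in>C. h x \<partial>M)"
    using C Y h by (simp add: set_lebesgue_integral_def integrable_indicator_mult_real
      integrable_indicator_finite)
  finally show ?thesis unfolding Y_def .
qed

lemma (in finite_measure) measure_tendsto_0_of_set_integral_tendsto_0:
  fixes h :: "'a \<Rightarrow> real"
  assumes h: "integrable M h" and D: "D \<in> sets M" and pos: "AE x in M. x \<in> D \<longrightarrow> 0 < h x"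
    and C: "\<And>j. C j \<in> sets M" "\<And>j. C j \<subseteq> D"
    and lim: "(\<lambda>j. \<integral>x\<in>C j. h x \<partial>M) \<longlonglongrightarrow> 0"
  shows "(\<lambda>j. measure M (C j)) \<longlonglongrightarrow> 0"
proof (rule LIMSEQ_I)
  fix r :: real assume r: "0 < r"
  have "h \<in> borel_measurable M" using h by auto
  then obtain k where k: "measure M {x \<in> D. h x < 1 / Suc k} < r/2"
    using LIMSEQ_D[OF measure_sublevel_tendsto_0[OF _ D pos], of "r/2"] r by force
  have "0 < r / (2 * Suc k)" using r by simp
  then obtain J where J: "\<And>j. J \<le> j \<Longrightarrow> (\<integral>x\<in>C j. h x \<partial>M) < r / (2 * Suc k)"
    using LIMSEQ_D[OF lim] by force
  show "\<exists>J. \<forall>j\<ge>J. norm (measure M (C j) - 0) < r"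
  proof (intro exI allI impI)
    fix j assume j: "J \<le> j"
    have "measure M (C j) \<le> measure M {x \<in> D. h x < 1 / Suc k} + real (Suc k) * (\<integral>x\<in>C j. h x \<partial>M)"
      using h D pos C by (rule measure_le_sublevel_plus_set_integral)
    also have "\<dots> < r/2 + real (Suc k) * (r / (2 * Suc k))"
      using k J[OF j] by (intro add_strict_mono mult_strict_left_mono) auto
    also have "\<dots> = r" by (simp add: field_simps)
    finally show "norm (measure M (C j) - 0) < r" by simp
  qed
qed

lemma (in finite_measure) AE_real_cond_exp_indicator_pos:
  assumes F: "subalgebra M F" and D: "D \<in> sets M"
  shows "AE x in M. x \<in> D \<longrightarrow> 0 < real_cond_exp M F (indicator D) x"
proof -
  interpret sigma_finite_subalgebra M F by (rule sigma_finite_subalgebra_of_subalgebra[OF F])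
  have D_int: "integrable M (indicator D :: 'a \<Rightarrow> real)" using D by auto
  define h where "h = real_cond_exp M F (indicator D)"
  have [measurable]: "h \<in> borel_measurable F" unfolding h_def by simp
  have h_int: "integrable M h" unfolding h_def using real_cond_exp_int(1)[OF D_int] .
  have h_nonneg: "AE x in M. 0 \<le> h x"
    unfolding h_def by (rule real_cond_exp_pos) (use D in \<open>auto simp: indicator_def\<close>)
  define Z where "Z = {x \<in> space M. h x \<le> 0}"
  have Z_F: "Z \<in> sets F"
  proof -
    have "{x \<in> space F. h x \<le> 0} \<in> sets F" by measurable
    moreover have "space F = space M" using F by (simp add: subalgebra_def)
    ultimately show ?thesis unfolding Z_def by simp
  qed
  then have Z: "Z \<in> sets M" using F by (auto simp: subalgebra_def)
  have "measure M (Z \<inter> D) = (\<integral>x\<in>Z. h x \<partial>M)"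
    using set_integral_indicator_real[OF Z D] real_cond_exp_intA[OF D_int Z_F] unfolding h_def by simp
  also have "\<dots> \<le> (\<integral>x. 0 \<partial>M)" unfolding set_lebesgue_integral_def real_scaleR_def
    by (rule integral_mono[OF integrable_indicator_mult_real[OF Z h_int]]) (auto simp: Z_def indicator_def)
  finally have "Z \<inter> D \<in> null_sets M"
    using Z D measure_nonneg[of M "Z \<inter> D"] by (intro null_setsI_measure_eq_0) auto
  then have "AE x in M. x \<notin> Z \<inter> D" by (rule AE_not_in)
  then show ?thesis unfolding h_def[symmetric] using h_nonneg AE_space by eventually_elim (auto simp: Z_def)
qed

lemma (in sigma_finite_subalgebra) integral_abs_diff_real_cond_exp_le:
  fixes f g :: "'a \<Rightarrow> real"
  assumes f: "integrable M f" and g: "integrable M g"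
  shows "(\<integral>x. \<bar>real_cond_exp M F f x - real_cond_exp M F g x\<bar> \<partial>M) \<le> (\<integral>x. \<bar>f x - g x\<bar> \<partial>M)"
proof -
  define w where "w x = real_cond_exp M F f x - real_cond_exp M F g x" for x
  define B where "B = {x\<in>space M. 0 \<le> w x}"
  have Ef: "integrable M (real_cond_exp M F f)" and Eg: "integrable M (real_cond_exp M F g)"
    using f g by auto
  have "{x\<in>space F. 0 \<le> w x} \<in> sets F" unfolding w_def by measurable
  then have B_F: "B \<in> sets F" "space M - B \<in> sets F"
    unfolding B_def using subalg by (auto simp: subalgebra_def dest: sets.compl_sets)
  then have B_M: "B \<in> sets M" "space M - B \<in> sets M" using subalg by (auto simp: subalgebra_def)
  have "(\<integral>x\<in>A. w x \<partial>M) = (\<integral>x\<in>A. f x - g x \<partial>M)" if A: "A \<in> sets F" "A \<in> sets M" for A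
    unfolding w_def using A Ef Eg f g real_cond_exp_intA[OF f A(1)] real_cond_exp_intA[OF g A(1)]
    by (simp add: set_integral_diff set_integrable_def integrable_indicator_mult_real)
  then have "(\<integral>x. \<bar>w x\<bar> \<partial>M) \<le> (\<integral>x. \<bar>f x - g x\<bar> \<partial>M)"
    using B_F B_M Ef Eg f g unfolding w_def
    by (intro integral_abs_le_of_set_integrals_eq[OF _ _ B_M(1) B_def[unfolded w_def]]) auto
  then show ?thesis unfolding w_def .
qed

section \<open>Measure preserving systems with a Perron--Frobenius operator\<close>

locale perron_frobenius_system =
  fixes M :: "'a measure" and \<phi> :: "'a \<Rightarrow> 'a" and P :: "('a \<Rightarrow> real) \<Rightarrow> 'a \<Rightarrow> real"
  assumes mpds: "mpds M \<phi>" and bimeasurable: "bimeasurable M \<phi>"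
    and perron_frobenius: "perron_frobenius M \<phi> P"
begin

sublocale prob_space M using mpds unfolding mpds_def by auto

lemma measurable_phi [measurable]: "\<phi> \<in> M \<rightarrow>\<^sub>M M"
  using mpds unfolding mpds_def by auto

lemma measurable_funpow [measurable]: "\<phi> ^^ n \<in> M \<rightarrow>\<^sub>M M"
  by (induction n) (auto intro: measurable_compose[OF _ measurable_phi])

lemma funpow_in_space: "x \<in> space M \<Longrightarrow> (\<phi> ^^ n) x \<in> space M"
  using measurable_space[OF measurable_funpow] by blast

lemma vimage_funpow_Suc:
  "(\<phi> ^^ Suc n) -` A \<inter> space M = (\<phi> ^^ n) -` (\<phi> -` A \<inter> space M) \<inter> space M"
  using funpow_in_space by auto

lemma emeasure_vimage_funpow:
  "A \<in> sets M \<Longrightarrow> emeasure M ((\<phi> ^^ n) -` A \<inter> space M) = emeasure M A"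
proof (induction n arbitrary: A)
  case 0
  then show ?case using sets.sets_into_space by (simp add: Int_absorb2)
next
  case (Suc n)
  have "\<phi> -` A \<inter> space M \<in> sets M" using Suc.prems by measurable
  then show ?case unfolding vimage_funpow_Suc
    by (subst Suc.IH) (use mpds Suc.prems in \<open>simp_all add: mpds_def\<close>)
qed

lemma measure_vimage_funpow: "A \<in> sets M \<Longrightarrow> measure M ((\<phi> ^^ n) -` A \<inter> space M) = measure M A"
  using emeasure_vimage_funpow by (simp add: measure_def)

lemma distr_funpow: "distr M M (\<phi> ^^ n) = M"
  by (rule measure_eqI) (auto simp: emeasure_distr emeasure_vimage_funpow)

lemma integral_comp_funpow:
  "(f :: 'a \<Rightarrow> real) \<in> borel_measurable M \<Longrightarrow> (\<integral>x. f ((\<phi> ^^ n) x) \<partial>M) = (\<integral>x. f x \<partial>M)"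
  using integral_distr[OF measurable_funpow, of f n] by (simp add: distr_funpow)

lemma integrable_comp_funpow:
  "integrable M (f :: 'a \<Rightarrow> real) \<Longrightarrow> integrable M (\<lambda>x. f ((\<phi> ^^ n) x))"
  using integrable_distr_eq[OF measurable_funpow, of f n] by (simp add: distr_funpow)

lemma set_integral_comp_funpow:
  fixes f :: "'a \<Rightarrow> real"
  assumes f: "f \<in> borel_measurable M" and B: "B \<in> sets M"
  shows "(\<integral>x\<in>(\<phi> ^^ n) -` B \<inter> space M. f ((\<phi> ^^ n) x) \<partial>M) = (\<integral>x\<in>B. f x \<partial>M)"
proof -
  have "(\<integral>x\<in>(\<phi> ^^ n) -` B \<inter> space M. f ((\<phi> ^^ n) x) \<partial>M)
      = (\<integral>x. indicator B ((\<phi> ^^ n) x) * f ((\<phi> ^^ n) x) \<partial>M)"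
    unfolding set_lebesgue_integral_def
    by (rule Bochner_Integration.integral_cong) (auto simp: indicator_def)
  also have "\<dots> = (\<integral>x\<in>B. f x \<partial>M)"
    unfolding set_lebesgue_integral_def using f B
    by (subst integral_comp_funpow[of "\<lambda>x. indicator B x * f x"]) auto
  finally show ?thesis .
qed

lemma integrable_funpow_P_and_set_integral:
  assumes f: "integrable M f"
  shows "integrable M ((P ^^ n) f) \<and>
    (\<forall>A\<in>sets M. (\<integral>x\<in>A. (P ^^ n) f x \<partial>M) = (\<integral>x\<in>(\<phi> ^^ n) -` A \<inter> space M. f x \<partial>M))"
proof (induction n)
  case 0
  then show ?case using f sets.sets_into_space by (simp add: Int_absorb2)
next
  case (Suc n)
  then have Pn: "integrable M ((P ^^ n) f)" by simp
  have "(\<integral>x\<in>A. P ((P ^^ n) f) x \<partial>M) = (\<integral>x\<in>(\<phi> ^^ Suc n) -` A \<inter> space M. f x \<partial>M)"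
    if A: "A \<in> sets M" for A
  proof -
    have "\<phi> -` A \<inter> space M \<in> sets M" using A by measurable
    then show ?thesis
      using perron_frobenius Pn A Suc unfolding perron_frobenius_def vimage_funpow_Suc by auto
  qed
  then show ?case using perron_frobenius Pn unfolding perron_frobenius_def by (simp add: comp_def)
qed

lemma integrable_funpow_P: "integrable M f \<Longrightarrow> integrable M ((P ^^ n) f)"
  using integrable_funpow_P_and_set_integral by blast

lemma set_integral_funpow_P:
  "integrable M f \<Longrightarrow> A \<in> sets M \<Longrightarrow>
    (\<integral>x\<in>A. (P ^^ n) f x \<partial>M) = (\<integral>x\<in>(\<phi> ^^ n) -` A \<inter> space M. f x \<partial>M)"
  using integrable_funpow_P_and_set_integral by blast

lemma integral_abs_diff_funpow_P_le:
  assumes f: "integrable M f" and g: "integrable M g"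
  shows "(\<integral>x. \<bar>(P ^^ n) f x - (P ^^ n) g x\<bar> \<partial>M) \<le> (\<integral>x. \<bar>f x - g x\<bar> \<partial>M)"
proof -
  define w where "w x = (P ^^ n) f x - (P ^^ n) g x" for x
  define B where "B = {x\<in>space M. 0 \<le> w x}"
  have Pf: "integrable M ((P ^^ n) f)" and Pg: "integrable M ((P ^^ n) g)"
    using f g integrable_funpow_P by auto
  have B: "B \<in> sets M" "space M - B \<in> sets M" unfolding B_def w_def using Pf Pg by measurable
  have "(\<integral>x\<in>A. w x \<partial>M) = (\<integral>x\<in>(\<phi> ^^ n) -` A \<inter> space M. f x - g x \<partial>M)" if A: "A \<in> sets M" for A
  proof -
    have "(\<phi> ^^ n) -` A \<inter> space M \<in> sets M" using A by measurable
    then show ?thesis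
      unfolding w_def using A f g Pf Pg set_integral_funpow_P[OF f A] set_integral_funpow_P[OF g A]
      by (simp add: set_integral_diff set_integrable_def integrable_indicator_mult_real)
  qed
  moreover have "(\<phi> ^^ n) -` (space M - B) \<inter> space M = space M - ((\<phi> ^^ n) -` B \<inter> space M)"
    using funpow_in_space by auto
  moreover have "(\<phi> ^^ n) -` B \<inter> space M \<in> sets M" using B by measurable
  ultimately have "(\<integral>x. \<bar>w x\<bar> \<partial>M) \<le> (\<integral>x. \<bar>f x - g x\<bar> \<partial>M)"
    using B f g Pf Pg unfolding w_def
    by (intro integral_abs_le_of_set_integrals_eq[OF _ _ _ B_def[unfolded w_def]]) auto
  then show ?thesis unfolding w_def .
qed

definition Sigma_n_measure :: "nat \<Rightarrow> 'a measure" where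
  "Sigma_n_measure n = vimage_algebra (space M) (\<phi> ^^ n) M"

lemma sets_Sigma_n_measure: "sets (Sigma_n_measure n) = Sigma_n M \<phi> n"
  unfolding Sigma_n_measure_def Sigma_n_def by (rule sets_vimage_algebra2) (auto simp: funpow_in_space)

lemma space_Sigma_n_measure [simp]: "space (Sigma_n_measure n) = space M"
  unfolding Sigma_n_measure_def by simp

lemma subalgebra_Sigma_n_measure: "subalgebra M (Sigma_n_measure n)"
  unfolding subalgebra_def sets_Sigma_n_measure Sigma_n_def by auto

lemma subalgebra_Sigma_n_measure_mono:
  assumes "n \<le> m"
  shows "subalgebra (Sigma_n_measure n) (Sigma_n_measure m)"
proof -
  have "(\<phi> ^^ m) -` A \<inter> space M \<in> Sigma_n M \<phi> n" if A: "A \<in> sets M" for A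
  proof -
    have "(\<phi> ^^ m) -` A \<inter> space M = (\<phi> ^^ n) -` ((\<phi> ^^ (m - n)) -` A \<inter> space M) \<inter> space M"
      using assms funpow_in_space funpow_add[of "m - n" n \<phi>] by auto
    moreover have "(\<phi> ^^ (m - n)) -` A \<inter> space M \<in> sets M" using A by measurable
    ultimately show ?thesis unfolding Sigma_n_def by blast
  qed
  then show ?thesis unfolding subalgebra_def sets_Sigma_n_measure by (auto simp: Sigma_n_def)
qed

lemma borel_measurable_comp_funpow_Sigma_n:
  "F \<in> borel_measurable M \<Longrightarrow> (\<lambda>x. F ((\<phi> ^^ n) x)) \<in> borel_measurable (Sigma_n_measure n)"
  unfolding Sigma_n_measure_def
  by (rule measurable_compose[OF measurable_vimage_algebra1]) (auto simp: funpow_in_space)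

lemma real_cond_exp_Sigma_n_measure:
  assumes f: "integrable M f"
  shows "AE x in M. real_cond_exp M (Sigma_n_measure n) f x = (P ^^ n) f ((\<phi> ^^ n) x)"
proof -
  interpret sigma_finite_subalgebra M "Sigma_n_measure n"
    by (rule sigma_finite_subalgebra_of_subalgebra[OF subalgebra_Sigma_n_measure])
  have Pf: "integrable M ((P ^^ n) f)" using f integrable_funpow_P by auto
  show ?thesis
  proof (rule real_cond_exp_charact)
    fix A assume "A \<in> sets (Sigma_n_measure n)"
    then obtain B where B: "B \<in> sets M" and A: "A = (\<phi> ^^ n) -` B \<inter> space M"
      unfolding sets_Sigma_n_measure Sigma_n_def by auto
    show "(\<integral>x\<in>A. f x \<partial>M) = (\<integral>x\<in>A. (P ^^ n) f ((\<phi> ^^ n) x) \<partial>M)"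
      unfolding A using set_integral_comp_funpow[OF _ B] set_integral_funpow_P[OF f B] Pf by simp
  qed (use f Pf in \<open>auto intro: integrable_comp_funpow borel_measurable_comp_funpow_Sigma_n\<close>)
qed

abbreviation invariant_algebra :: "'a measure" where
  "invariant_algebra \<equiv> sigma (space M) (Sigma_inv M \<phi>)"

lemma Sigma_inv_subset_Pow: "Sigma_inv M \<phi> \<subseteq> Pow (space M)"
  unfolding Sigma_inv_def using sets.sets_into_space by auto

lemma space_invariant_algebra [simp]: "space invariant_algebra = space M"
  using Sigma_inv_subset_Pow by simp

lemma sets_invariant_algebra: "sets invariant_algebra = Sigma_inv M \<phi>"
proof
  show "sets invariant_algebra \<subseteq> Sigma_inv M \<phi>"
  proof
    fix A assume "A \<in> sets invariant_algebra"
    then have "A \<in> sigma_sets (space M) (Sigma_inv M \<phi>)" using Sigma_inv_subset_Pow by simp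
    then show "A \<in> Sigma_inv M \<phi>"
    proof induction
      case (Compl a)
      moreover have "\<phi> -` (space M - a) \<inter> space M = space M - (\<phi> -` a \<inter> space M)"
        using measurable_space[OF measurable_phi] by blast
      ultimately show ?case unfolding Sigma_inv_def by auto
    next
      case (Union a)
      then have "\<phi> -` (\<Union>i. a i) \<inter> space M = (\<Union>i. a i)" unfolding Sigma_inv_def by blast
      with Union show ?case unfolding Sigma_inv_def by auto
    qed (auto simp: Sigma_inv_def)
  qed
  show "Sigma_inv M \<phi> \<subseteq> sets invariant_algebra"
    using Sigma_inv_subset_Pow by (simp add: sigma_sets.Basic subsetI)
qed

lemma vimage_funpow_invariant:
  assumes "A \<in> Sigma_inv M \<phi>"
  shows "(\<phi> ^^ n) -` A \<inter> space M = A"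
proof (induction n)
  case (Suc n)
  then show ?case using assms unfolding vimage_funpow_Suc Sigma_inv_def by simp
qed (use assms in \<open>auto simp: Sigma_inv_def dest: sets.sets_into_space\<close>)

lemma Sigma_inv_subset_Sigma_infty: "Sigma_inv M \<phi> \<subseteq> Sigma_infty M \<phi>"
  unfolding Sigma_infty_def Sigma_n_def
  using vimage_funpow_invariant by (auto simp: Sigma_inv_def) (metis vimage_funpow_invariant Sigma_inv_def)

lemma subalgebra_invariant_algebra: "subalgebra M invariant_algebra"
proof -
  have "Sigma_inv M \<phi> \<subseteq> sets M" by (auto simp: Sigma_inv_def)
  then show ?thesis unfolding subalgebra_def sets_invariant_algebra space_invariant_algebra by simp
qed

lemma subalgebra_Sigma_n_invariant_algebra: "subalgebra (Sigma_n_measure n) invariant_algebra"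
  using Sigma_inv_subset_Sigma_infty sets_invariant_algebra
  by (auto simp: subalgebra_def sets_Sigma_n_measure Sigma_infty_def)

interpretation invariant: sigma_finite_subalgebra M invariant_algebra
  by (rule sigma_finite_subalgebra_of_subalgebra[OF subalgebra_invariant_algebra])

lemma invariant_comp_funpow:
  fixes F :: "'a \<Rightarrow> real"
  assumes F: "F \<in> borel_measurable invariant_algebra" and x: "x \<in> space M"
  shows "F ((\<phi> ^^ n) x) = F x"
proof -
  have "F -` {F x} \<inter> space M \<in> Sigma_inv M \<phi>"
    using measurable_sets[OF F, of "{F x}"] sets_invariant_algebra by simp
  then have "(\<phi> ^^ n) -` (F -` {F x} \<inter> space M) \<inter> space M = F -` {F x} \<inter> space M"
    by (rule vimage_funpow_invariant)
  then show ?thesis using x by blast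
qed

section \<open>Convergence of \<open>P\<^sup>n f\<close> when \<open>\<Sigma>\<^sub>\<infinity>\<close> and \<open>\<Sigma>\<^sub>i\<^sub>n\<^sub>v\<close> agree up to null sets\<close>

text \<open>The set \<open>{v < u}\<close> lies in \<open>\<Sigma>\<^sub>\<infinity>\<close>, so by (iii) it is a.e.\ equal to an invariant set, over which
  \<open>u - v\<close> integrates to \<open>0\<close>.\<close>
lemma AE_le_of_completions_eq:
  fixes u v :: "'a \<Rightarrow> real"
  assumes iii: "completion_within M (Sigma_infty M \<phi>) = completion_within M (Sigma_inv M \<phi>)"
    and u: "integrable M u" "\<And>m. u \<in> borel_measurable (Sigma_n_measure m)"
    and v: "integrable M v" "\<And>m. v \<in> borel_measurable (Sigma_n_measure m)"
    and eq: "\<And>C. C \<in> Sigma_inv M \<phi> \<Longrightarrow> (\<integral>x\<in>C. u x \<partial>M) = (\<integral>x\<in>C. v x \<partial>M)"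
  shows "AE x in M. u x \<le> v x"
proof -
  define C where "C = {x \<in> space M. v x < u x}"
  have "C \<in> sets (Sigma_n_measure m)" for m
  proof -
    have "{x \<in> space (Sigma_n_measure m). v x < u x} \<in> sets (Sigma_n_measure m)"
      by (rule borel_measurable_less[OF v(2) u(2)])
    then show ?thesis unfolding C_def by simp
  qed
  then have C: "C \<in> Sigma_infty M \<phi>" "C \<in> sets M"
    unfolding Sigma_infty_def using sets_Sigma_n_measure subalgebra_Sigma_n_measure[of 0]
    by (auto simp: subalgebra_def)
  then have "C \<in> completion_within M (Sigma_infty M \<phi>)" unfolding completion_within_def by force
  then obtain C' where C': "C' \<in> Sigma_inv M \<phi>" and "measure M ((C - C') \<union> (C' - C)) = 0"
    using iii unfolding completion_within_def by auto
  moreover have C'_sets: "C' \<in> sets M" using C' unfolding Sigma_inv_def by auto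
  ultimately have "(C - C') \<union> (C' - C) \<in> null_sets M"
    using C by (auto simp: emeasure_eq_measure null_sets_def)
  then have "AE x in M. x \<in> C' \<longleftrightarrow> x \<in> C" by (rule AE_not_in[THEN eventually_mono]) blast
  then have "(\<integral>x\<in>C. u x - v x \<partial>M) = (\<integral>x\<in>C'. u x - v x \<partial>M)"
    using u v C C'_sets by (intro set_integral_cong_set) (auto simp: set_borel_measurable_def)
  also have "\<dots> = 0"
    using eq[OF C'] u v C'_sets by (simp add: set_integral_diff set_integrable_def integrable_indicator_mult_real)
  finally have "(\<integral>x. indicator C x * (u x - v x) \<partial>M) = 0"
    unfolding set_lebesgue_integral_def by simp
  moreover have "integrable M (\<lambda>x. indicator C x * (u x - v x))"
    using u v C by (intro integrable_indicator_mult_real) auto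
  ultimately have "AE x in M. indicator C x * (u x - v x) = 0"
    by (subst integral_nonneg_eq_0_iff_AE[symmetric]) (auto simp: C_def indicator_def)
  then show ?thesis using AE_space by eventually_elim (auto simp: C_def indicator_def split: if_splits)
qed

lemma AE_eq_of_completions_eq:
  fixes u v :: "'a \<Rightarrow> real"
  assumes iii: "completion_within M (Sigma_infty M \<phi>) = completion_within M (Sigma_inv M \<phi>)"
    and u: "integrable M u" "\<And>m. u \<in> borel_measurable (Sigma_n_measure m)"
    and v: "integrable M v" "\<And>m. v \<in> borel_measurable (Sigma_n_measure m)"
    and eq: "\<And>C. C \<in> Sigma_inv M \<phi> \<Longrightarrow> (\<integral>x\<in>C. u x \<partial>M) = (\<integral>x\<in>C. v x \<partial>M)"
  shows "AE x in M. u x = v x"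
proof -
  have "AE x in M. u x \<le> v x" by (rule AE_le_of_completions_eq[OF iii u v eq])
  moreover have "AE x in M. v x \<le> u x" by (rule AE_le_of_completions_eq[OF iii v u]) (simp add: eq)
  ultimately show ?thesis by eventually_elim simp
qed

lemma tendsto_funpow_P_bounded:
  fixes f :: "'a \<Rightarrow> real"
  assumes iii: "completion_within M (Sigma_infty M \<phi>) = completion_within M (Sigma_inv M \<phi>)"
    and f: "f \<in> borel_measurable M" "\<And>x. x \<in> space M \<Longrightarrow> \<bar>f x\<bar> \<le> c"
  shows "(\<lambda>n. \<integral>x. \<bar>(P ^^ n) f x - real_cond_exp M invariant_algebra f x\<bar> \<partial>M) \<longlonglongrightarrow> 0"
proof -
  have f_int: "integrable M f" using f by (intro integrable_const_bound[where B=c]) auto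
  obtain g where g: "\<And>m. g \<in> borel_measurable (Sigma_n_measure m)" "integrable M g"
    and g_lim: "(\<lambda>n. \<integral>x. \<bar>real_cond_exp M (Sigma_n_measure n) f x - g x\<bar> \<partial>M) \<longlonglongrightarrow> 0"
    and g_set: "\<And>C. (\<And>n. C \<in> sets (Sigma_n_measure n)) \<Longrightarrow> (\<integral>x\<in>C. g x \<partial>M) = (\<integral>x\<in>C. f x \<partial>M)"
    using real_cond_exp_decreasing_L1_convergent[where F=Sigma_n_measure, OF subalgebra_Sigma_n_measure
        subalgebra_Sigma_n_measure_mono f] by blast
  define h where "h = real_cond_exp M invariant_algebra f"
  have h: "h \<in> borel_measurable invariant_algebra" "integrable M h" unfolding h_def
    using invariant.real_cond_exp_int(1)[OF f_int] by simp_all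
  have h_meas: "h \<in> borel_measurable (Sigma_n_measure m)" for m
    using measurable_from_subalg[OF subalgebra_Sigma_n_invariant_algebra h(1)] .
  have g_h: "AE x in M. g x = h x"
  proof (rule AE_eq_of_completions_eq[OF iii g(2,1) h(2) h_meas])
    fix C assume C: "C \<in> Sigma_inv M \<phi>"
    then have "C \<in> sets (Sigma_n_measure n)" for n
      using Sigma_inv_subset_Sigma_infty sets_Sigma_n_measure by (auto simp: Sigma_infty_def)
    then have "(\<integral>x\<in>C. g x \<partial>M) = (\<integral>x\<in>C. f x \<partial>M)" by (rule g_set)
    also have "\<dots> = (\<integral>x\<in>C. h x \<partial>M)"
      unfolding h_def using C sets_invariant_algebra by (intro invariant.real_cond_exp_intA[OF f_int]) simp
    finally show "(\<integral>x\<in>C. g x \<partial>M) = (\<integral>x\<in>C. h x \<partial>M)" .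
  qed
  have "(\<integral>x. \<bar>(P ^^ n) f x - h x\<bar> \<partial>M)
      = (\<integral>x. \<bar>real_cond_exp M (Sigma_n_measure n) f x - g x\<bar> \<partial>M)" for n
  proof -
    have [measurable]: "(P ^^ n) f \<in> borel_measurable M" "h \<in> borel_measurable M"
      using integrable_funpow_P[OF f_int] h(2) by auto
    have "(\<integral>x. \<bar>(P ^^ n) f x - h x\<bar> \<partial>M) = (\<integral>x. \<bar>(P ^^ n) f ((\<phi> ^^ n) x) - h ((\<phi> ^^ n) x)\<bar> \<partial>M)"
      by (rule integral_comp_funpow[symmetric]) simp
    also have "\<dots> = (\<integral>x. \<bar>real_cond_exp M (Sigma_n_measure n) f x - g x\<bar> \<partial>M)"
    proof (rule integral_cong_AE)
      show "AE x in M. \<bar>(P ^^ n) f ((\<phi> ^^ n) x) - h ((\<phi> ^^ n) x)\<bar>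
          = \<bar>real_cond_exp M (Sigma_n_measure n) f x - g x\<bar>"
        using real_cond_exp_Sigma_n_measure[OF f_int, of n] g_h AE_space
        by eventually_elim (simp add: invariant_comp_funpow[OF h(1)])
    qed (use g(2) in simp_all)
    finally show ?thesis .
  qed
  then show ?thesis using g_lim unfolding h_def by simp
qed

lemma tendsto_funpow_P_real_cond_exp:
  fixes f :: "'a \<Rightarrow> real"
  assumes iii: "completion_within M (Sigma_infty M \<phi>) = completion_within M (Sigma_inv M \<phi>)"
    and f: "integrable M f"
  shows "(\<lambda>n. \<integral>x. \<bar>(P ^^ n) f x - real_cond_exp M invariant_algebra f x\<bar> \<partial>M) \<longlonglongrightarrow> 0"
  using integrable_funpow_P invariant.real_cond_exp_int(1) integral_abs_diff_funpow_P_le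
    invariant.integral_abs_diff_real_cond_exp_le tendsto_funpow_P_bounded[OF iii] f
  by (rule L1_tendsto_of_contractions[where T="\<lambda>n. P ^^ n"])

lemma conv_L1_funpow_P_real_cond_exp:
  assumes iii: "completion_within M (Sigma_infty M \<phi>) = completion_within M (Sigma_inv M \<phi>)"
    and f: "integrable M f"
  shows "conv_L1 M (\<lambda>n. (P ^^ n) f) (real_cond_exp M invariant_algebra f)"
  unfolding conv_L1_def using invariant.real_cond_exp_int(1)[OF f] tendsto_funpow_P_real_cond_exp[OF iii f]
  by simp

section \<open>Almost invariant sets\<close>

text \<open>If \<open>1\<^sub>A\<close> is approximated by \<open>G \<circ> \<phi>\<^sup>n\<close> and by \<open>G \<circ> \<phi>\<^sup>n\<^sup>+\<^sup>1\<close>, then \<open>1\<^sub>A\<close> is approximated by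
  \<open>1\<^sub>A \<circ> \<phi>\<close> as well, because composition with \<open>\<phi>\<close> preserves \<open>L\<^sup>1\<close> distances.\<close>
lemma measure_sym_diff_vimage_eq_0:
  fixes G :: "'a \<Rightarrow> real"
  assumes A: "A \<in> sets M" and G: "integrable M G"
    and lim: "(\<lambda>n. \<integral>x. \<bar>indicator A x - G ((\<phi> ^^ n) x)\<bar> \<partial>M) \<longlonglongrightarrow> 0"
  shows "measure M ((\<phi> -` A \<inter> space M - A) \<union> (A - \<phi> -` A \<inter> space M)) = 0"
proof -
  define t where "t n = (\<integral>x. \<bar>indicator A x - G ((\<phi> ^^ n) x)\<bar> \<partial>M)" for n
  have [measurable]: "G \<in> borel_measurable M" using G by auto
  have A_int: "integrable M (indicator A :: 'a \<Rightarrow> real)" and A\<phi>_int: "integrable M (\<lambda>x. indicator A (\<phi> x) :: real)"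
    using A integrable_comp_funpow[of "indicator A" 1] by auto
  have shift: "(\<integral>x. \<bar>indicator A (\<phi> x) - G ((\<phi> ^^ Suc n) x)\<bar> \<partial>M) = t n" for n
    using integral_comp_funpow[of "\<lambda>y. \<bar>indicator A y - G ((\<phi> ^^ n) y)\<bar>" 1] A
    by (simp add: t_def funpow_Suc_right del: funpow.simps)
  define d where "d = (\<integral>x. \<bar>indicator A (\<phi> x) - indicator A x\<bar> \<partial>M :: real)"
  have "d \<le> t n + t (Suc n)" for n
  proof -
    have "d \<le> (\<integral>x. \<bar>indicator A (\<phi> x) - G ((\<phi> ^^ Suc n) x)\<bar> \<partial>M)
        + (\<integral>x. \<bar>G ((\<phi> ^^ Suc n) x) - indicator A x\<bar> \<partial>M)"
      unfolding d_def by (rule integral_abs_diff_triangle[OF A\<phi>_int integrable_comp_funpow[OF G] A_int])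
    then show ?thesis unfolding shift by (simp add: t_def abs_minus_commute)
  qed
  moreover have "(\<lambda>n. t n + t (Suc n)) \<longlonglongrightarrow> 0 + 0"
    using lim unfolding t_def[symmetric] by (intro tendsto_add LIMSEQ_Suc)
  ultimately have "d \<le> 0" by (intro LIMSEQ_le_const) auto
  moreover have "d = measure M ((\<phi> -` A \<inter> space M - A) \<union> (A - \<phi> -` A \<inter> space M))"
  proof -
    have "d = (\<integral>x. \<bar>indicator (\<phi> -` A \<inter> space M) x - indicator A x\<bar> \<partial>M)"
      unfolding d_def by (rule Bochner_Integration.integral_cong) (auto simp: indicator_def)
    also have "\<dots> = measure M ((\<phi> -` A \<inter> space M - A) \<union> (A - \<phi> -` A \<inter> space M))"
      using A by (intro integral_indicator_sym_diff) measurable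
    finally show ?thesis .
  qed
  ultimately show ?thesis using measure_nonneg[of M] by (metis antisym)
qed

lemma null_sets_sym_diff_vimage_funpow:
  assumes A: "A \<in> sets M"
    and almost_inv: "measure M ((\<phi> -` A \<inter> space M - A) \<union> (A - \<phi> -` A \<inter> space M)) = 0"
  shows "((\<phi> ^^ n) -` A \<inter> space M - A) \<union> (A - (\<phi> ^^ n) -` A \<inter> space M) \<in> null_sets M"
proof -
  define N where "N n = ((\<phi> ^^ n) -` A \<inter> space M - A) \<union> (A - (\<phi> ^^ n) -` A \<inter> space M)" for n
  have N_sets: "N n \<in> sets M" for n unfolding N_def using A by measurable
  have N1: "N 1 \<in> null_sets M"
    using almost_inv N_sets[of 1] by (intro null_setsI_measure_eq_0) (simp_all add: N_def)
  have "N n \<in> null_sets M"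
  proof (induction n)
    case 0
    then show ?case using sets.sets_into_space[OF A] by (simp add: N_def Int_absorb2)
  next
    case (Suc n)
    have "N (Suc n) \<subseteq> ((\<phi> ^^ n) -` N 1 \<inter> space M) \<union> N n"
      unfolding N_def using funpow_in_space by auto
    moreover have "(\<phi> ^^ n) -` N 1 \<inter> space M \<in> null_sets M"
    proof (rule null_setsI)
      show "emeasure M ((\<phi> ^^ n) -` N 1 \<inter> space M) = 0"
        using N1 emeasure_vimage_funpow[OF N_sets[of 1]] by auto
      show "(\<phi> ^^ n) -` N 1 \<inter> space M \<in> sets M" using N_sets[of 1] by measurable
    qed
    ultimately show ?case using Suc N_sets[of "Suc n"] null_sets.Un null_sets_subset by metis
  qed
  then show ?thesis unfolding N_def .
qed

lemma infinitely_often_visited_invariant: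
  assumes A: "A \<in> sets M"
  shows "(\<Inter>K. \<Union>n. (\<phi> ^^ (n + K)) -` A \<inter> space M) \<in> Sigma_inv M \<phi>" (is "?A' \<in> _")
proof -
  have A'_iff: "x \<in> ?A' \<longleftrightarrow> x \<in> space M \<and> (\<forall>K. \<exists>n. (\<phi> ^^ (n + K)) x \<in> A)" for x by auto
  have "\<phi> -` ?A' \<inter> space M = ?A'"
  proof (intro set_eqI iffI)
    fix x assume "x \<in> \<phi> -` ?A' \<inter> space M"
    then have x: "x \<in> space M" and visits: "\<forall>K. \<exists>n. (\<phi> ^^ (n + K)) (\<phi> x) \<in> A"
      using A'_iff measurable_space[OF measurable_phi] by auto
    have "\<exists>n. (\<phi> ^^ (n + K)) x \<in> A" for K
    proof -
      obtain n where "(\<phi> ^^ (n + K)) (\<phi> x) \<in> A" using visits by blast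
      then have "(\<phi> ^^ (Suc n + K)) x \<in> A" by (simp add: funpow_Suc_right del: funpow.simps)
      then show ?thesis by blast
    qed
    then show "x \<in> ?A'" using x A'_iff by auto
  next
    fix x assume "x \<in> ?A'"
    then have x: "x \<in> space M" and visits: "\<forall>K. \<exists>n. (\<phi> ^^ (n + K)) x \<in> A" using A'_iff by auto
    have "\<exists>n. (\<phi> ^^ (n + K)) (\<phi> x) \<in> A" for K
    proof -
      obtain n where "(\<phi> ^^ (n + Suc K)) x \<in> A" using visits by blast
      then have "(\<phi> ^^ (n + K)) (\<phi> x) \<in> A" by (simp add: funpow_Suc_right del: funpow.simps)
      then show ?thesis by blast
    qed
    then show "x \<in> \<phi> -` ?A' \<inter> space M" using x measurable_space[OF measurable_phi] A'_iff by auto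
  qed
  moreover have "?A' \<in> sets M" using A by measurable
  ultimately show ?thesis unfolding Sigma_inv_def by auto
qed

text \<open>An almost invariant set is a.e. equal to the invariant set of points whose orbit visits it
  infinitely often.\<close>
lemma exists_invariant_set_ae_eq:
  assumes A: "A \<in> sets M"
    and almost_inv: "measure M ((\<phi> -` A \<inter> space M - A) \<union> (A - \<phi> -` A \<inter> space M)) = 0"
  shows "\<exists>A'\<in>Sigma_inv M \<phi>. measure M ((A - A') \<union> (A' - A)) = 0"
proof -
  define N where "N n = ((\<phi> ^^ n) -` A \<inter> space M - A) \<union> (A - (\<phi> ^^ n) -` A \<inter> space M)" for n
  define A' where "A' = (\<Inter>K. \<Union>n. (\<phi> ^^ (n + K)) -` A \<inter> space M)"
  have A'_iff: "x \<in> A' \<longleftrightarrow> x \<in> space M \<and> (\<forall>K. \<exists>n. (\<phi> ^^ (n + K)) x \<in> A)" for x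
    unfolding A'_def by auto
  have A'_inv: "A' \<in> Sigma_inv M \<phi>" unfolding A'_def using A by (rule infinitely_often_visited_invariant)
  have "(A - A') \<union> (A' - A) \<subseteq> (\<Union>n. N n)"
  proof
    fix x assume x: "x \<in> (A - A') \<union> (A' - A)"
    show "x \<in> (\<Union>n. N n)"
    proof (cases "x \<in> A")
      case True
      then have "x \<in> space M" "x \<notin> A'" using x sets.sets_into_space[OF A] by auto
      then obtain K where "\<forall>n. (\<phi> ^^ (n + K)) x \<notin> A" using A'_iff by auto
      then have "(\<phi> ^^ (0 + K)) x \<notin> A" by blast
      then show ?thesis using True \<open>x \<in> space M\<close> unfolding N_def by auto
    next
      case False
      with x A'_iff obtain n where "(\<phi> ^^ (n + 0)) x \<in> A" "x \<in> space M" by blast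
      then show ?thesis using False unfolding N_def by auto
    qed
  qed
  moreover have "(\<Union>n. N n) \<in> null_sets M"
    unfolding N_def using null_sets_sym_diff_vimage_funpow[OF A almost_inv] by auto
  moreover have "(A - A') \<union> (A' - A) \<in> sets M" using A A'_inv by (auto simp: Sigma_inv_def)
  ultimately have "(A - A') \<union> (A' - A) \<in> null_sets M" using null_sets_subset by blast
  then have "measure M ((A - A') \<union> (A' - A)) = 0" by (simp add: measure_def null_setsD1)
  then show ?thesis using A'_inv by blast
qed

lemma completions_eq_of_Sigma_infty_ae_invariant:
  assumes "\<And>A. A \<in> Sigma_infty M \<phi> \<Longrightarrow> \<exists>A'\<in>Sigma_inv M \<phi>. measure M ((A - A') \<union> (A' - A)) = 0"
  shows "completion_within M (Sigma_infty M \<phi>) = completion_within M (Sigma_inv M \<phi>)"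
proof
  show "completion_within M (Sigma_inv M \<phi>) \<subseteq> completion_within M (Sigma_infty M \<phi>)"
    unfolding completion_within_def using Sigma_inv_subset_Sigma_infty by blast
  show "completion_within M (Sigma_infty M \<phi>) \<subseteq> completion_within M (Sigma_inv M \<phi>)"
  proof
    fix X assume "X \<in> completion_within M (Sigma_infty M \<phi>)"
    then obtain B where X: "X \<in> sets M" and B: "B \<in> Sigma_infty M \<phi>"
      and XB: "measure M ((X - B) \<union> (B - X)) = 0"
      unfolding completion_within_def by auto
    obtain B' where B': "B' \<in> Sigma_inv M \<phi>" and BB': "measure M ((B - B') \<union> (B' - B)) = 0"
      using assms[OF B] by auto
    have B_sets: "B \<in> sets M" "B' \<in> sets M"
      using B B' unfolding Sigma_infty_def Sigma_n_def Sigma_inv_def by auto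
    have "(X - B') \<union> (B' - X) \<subseteq> ((X - B) \<union> (B - X)) \<union> ((B - B') \<union> (B' - B))" by auto
    moreover have "((X - B) \<union> (B - X)) \<union> ((B - B') \<union> (B' - B)) \<in> null_sets M"
      using XB BB' X B_sets by (intro null_sets.Un null_setsI_measure_eq_0) auto
    moreover have "(X - B') \<union> (B' - X) \<in> sets M" using X B_sets by auto
    ultimately have "(X - B') \<union> (B' - X) \<in> null_sets M" using null_sets_subset by blast
    then have "measure M ((X - B') \<union> (B' - X)) = 0" by (simp add: measure_def null_setsD1)
    then show "X \<in> completion_within M (Sigma_inv M \<phi>)"
      unfolding completion_within_def using X B' by auto
  qed
qed

lemma Sigma_infty_vimages:
  assumes "A \<in> Sigma_infty M \<phi>"
  obtains B where "\<And>n. B n \<in> sets M" "\<And>n. A = (\<phi> ^^ n) -` B n \<inter> space M"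
proof -
  have "\<forall>n. \<exists>C. C \<in> sets M \<and> A = (\<phi> ^^ n) -` C \<inter> space M"
    using assms unfolding Sigma_infty_def Sigma_n_def by blast
  then show ?thesis using that by metis
qed

lemma ae_invariant_of_indicator_L1_convergent:
  fixes G :: "'a \<Rightarrow> real"
  assumes B: "\<And>n. B n \<in> sets M" and A: "\<And>n. A = (\<phi> ^^ n) -` B n \<inter> space M"
    and G: "integrable M G" and lim: "(\<lambda>n. \<integral>x. \<bar>indicator (B n) x - G x\<bar> \<partial>M) \<longlonglongrightarrow> 0"
  shows "\<exists>A'\<in>Sigma_inv M \<phi>. measure M ((A - A') \<union> (A' - A)) = 0"
proof -
  have [measurable]: "G \<in> borel_measurable M" using G by auto
  have A_sets: "A \<in> sets M" using A[of 0] B[of 0] by simp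
  have "(\<integral>x. \<bar>indicator A x - G ((\<phi> ^^ n) x)\<bar> \<partial>M) = (\<integral>x. \<bar>indicator (B n) x - G x\<bar> \<partial>M)" for n
  proof -
    have "(\<integral>x. \<bar>indicator A x - G ((\<phi> ^^ n) x)\<bar> \<partial>M)
        = (\<integral>x. \<bar>indicator (B n) ((\<phi> ^^ n) x) - G ((\<phi> ^^ n) x)\<bar> \<partial>M)"
      using A[of n] by (intro Bochner_Integration.integral_cong) (auto simp: indicator_def)
    also have "\<dots> = (\<integral>x. \<bar>indicator (B n) x - G x\<bar> \<partial>M)"
      using B by (intro integral_comp_funpow) simp
    finally show ?thesis .
  qed
  with lim have "(\<lambda>n. \<integral>x. \<bar>indicator A x - G ((\<phi> ^^ n) x)\<bar> \<partial>M) \<longlonglongrightarrow> 0" by simp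
  then show ?thesis
    by (intro exists_invariant_set_ae_eq[OF A_sets] measure_sym_diff_vimage_eq_0[OF A_sets G])
qed

lemma funpow_P_indicator_vimage:
  assumes B: "B \<in> sets M" and A: "A = (\<phi> ^^ n) -` B \<inter> space M"
  shows "AE x in M. (P ^^ n) (indicator A) x = indicator B x"
proof (rule density_unique_real)
  have A_sets: "A \<in> sets M" unfolding A using B by measurable
  then show "integrable M ((P ^^ n) (indicator A))" by (intro integrable_funpow_P) auto
  show "integrable M (indicator B :: 'a \<Rightarrow> real)" using B by auto
  fix C assume C: "C \<in> sets M"
  have C_pre: "(\<phi> ^^ n) -` C \<inter> space M \<in> sets M" using C by measurable
  have "(\<integral>x\<in>C. (P ^^ n) (indicator A) x \<partial>M) = measure M ((\<phi> ^^ n) -` C \<inter> space M \<inter> A)"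
    using set_integral_funpow_P[OF integrable_indicator_finite[OF A_sets] C]
      set_integral_indicator_real[OF C_pre A_sets] by simp
  also have "(\<phi> ^^ n) -` C \<inter> space M \<inter> A = (\<phi> ^^ n) -` (C \<inter> B) \<inter> space M" unfolding A by auto
  also have "measure M \<dots> = (\<integral>x\<in>C. indicator B x \<partial>M)"
    using C B measure_vimage_funpow[of "C \<inter> B" n] by (simp add: set_integral_indicator_real)
  finally show "(\<integral>x\<in>C. (P ^^ n) (indicator A) x \<partial>M) = (\<integral>x\<in>C. indicator B x \<partial>M)" .
qed

lemma completions_eq_of_funpow_P_convergent:
  assumes ii: "\<forall>f. integrable M f \<longrightarrow> (\<exists>g. conv_L1 M (\<lambda>n. (P ^^ n) f) g)"
  shows "completion_within M (Sigma_infty M \<phi>) = completion_within M (Sigma_inv M \<phi>)"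
proof (rule completions_eq_of_Sigma_infty_ae_invariant)
  fix A assume "A \<in> Sigma_infty M \<phi>"
  then obtain B where B: "\<And>n. B n \<in> sets M" and A: "\<And>n. A = (\<phi> ^^ n) -` B n \<inter> space M"
    by (metis Sigma_infty_vimages)
  have "A \<in> sets M" using A[of 0] B[of 0] by simp
  then obtain G where G: "integrable M G"
    and lim: "(\<lambda>n. \<integral>x. \<bar>(P ^^ n) (indicator A) x - G x\<bar> \<partial>M) \<longlonglongrightarrow> 0"
    using ii unfolding conv_L1_def by blast
  have "(\<integral>x. \<bar>(P ^^ n) (indicator A) x - G x\<bar> \<partial>M) = (\<integral>x. \<bar>indicator (B n) x - G x\<bar> \<partial>M)" for n
  proof (rule integral_cong_AE)
    show "AE x in M. \<bar>(P ^^ n) (indicator A) x - G x\<bar> = \<bar>indicator (B n) x - G x\<bar>"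
      using funpow_P_indicator_vimage[OF B[of n] A[of n]] by eventually_elim simp
    show "(\<lambda>x. \<bar>(P ^^ n) (indicator A) x - G x\<bar>) \<in> borel_measurable M"
      using integrable_funpow_P[OF integrable_indicator_finite[OF \<open>A \<in> sets M\<close>], of n] G by auto
  qed (use B G in simp)
  with lim show "\<exists>A'\<in>Sigma_inv M \<phi>. measure M ((A - A') \<union> (A' - A)) = 0"
    by (intro ae_invariant_of_indicator_L1_convergent[OF B A G]) simp
qed

lemma sets_image_funpow: "X \<in> sets M \<Longrightarrow> (\<phi> ^^ n) ` X \<in> sets M"
proof (induction n)
  case (Suc n)
  have "(\<phi> ^^ Suc n) ` X = \<phi> ` ((\<phi> ^^ n) ` X)" by (simp add: image_comp)
  then show ?case using Suc bimeasurable unfolding bimeasurable_def by simp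
qed simp

text \<open>Its preimage under \<open>\<phi>\<^sup>n\<close> is all of \<open>\<Omega>\<close>, so the image \<open>\<phi>\<^sup>n(\<Omega>)\<close>, measurable by bimeasurability,
  has full measure.\<close>
lemma image_funpow_space_co_null: "space M - (\<phi> ^^ n) ` space M \<in> null_sets M"
proof -
  have img: "(\<phi> ^^ n) ` space M \<in> sets M" by (rule sets_image_funpow) simp
  have "(\<phi> ^^ n) -` ((\<phi> ^^ n) ` space M) \<inter> space M = space M" by auto
  then have "prob ((\<phi> ^^ n) ` space M) = 1"
    using measure_vimage_funpow[OF img, of n] by (simp add: prob_space)
  then show ?thesis using prob_compl[OF img] img by (intro null_setsI_measure_eq_0) auto
qed

lemma completions_eq_of_image_convergent:
  assumes i: "\<forall>A\<in>sets M. \<exists>B. conv_measure_algebra M (\<lambda>n. (\<phi> ^^ n) ` A) B"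
  shows "completion_within M (Sigma_infty M \<phi>) = completion_within M (Sigma_inv M \<phi>)"
proof (rule completions_eq_of_Sigma_infty_ae_invariant)
  fix A assume "A \<in> Sigma_infty M \<phi>"
  then obtain B where B: "\<And>n. B n \<in> sets M" and A: "\<And>n. A = (\<phi> ^^ n) -` B n \<inter> space M"
    by (metis Sigma_infty_vimages)
  have A_sets: "A \<in> sets M" using A[of 0] B[of 0] by simp
  then obtain B' where B': "B' \<in> sets M"
    and lim: "(\<lambda>n. measure M (((\<phi> ^^ n) ` A - B') \<union> (B' - (\<phi> ^^ n) ` A))) \<longlonglongrightarrow> 0"
    using i unfolding conv_measure_algebra_def by blast
  have "(\<integral>x. \<bar>indicator (B n) x - indicator B' x\<bar> \<partial>M :: real)
      = measure M (((\<phi> ^^ n) ` A - B') \<union> (B' - (\<phi> ^^ n) ` A))" for n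
  proof -
    have img: "(\<phi> ^^ n) ` A \<in> sets M" using sets_image_funpow[OF A_sets] .
    have img_eq: "(\<phi> ^^ n) ` A = B n \<inter> (\<phi> ^^ n) ` space M" using A[of n] by auto
    have "AE x in M. x \<in> B n \<longleftrightarrow> x \<in> (\<phi> ^^ n) ` A"
      using AE_not_in[OF image_funpow_space_co_null[of n]] AE_space
      by eventually_elim (auto simp: img_eq)
    then have "(\<integral>x. \<bar>indicator (B n) x - indicator B' x\<bar> \<partial>M :: real)
        = (\<integral>x. \<bar>indicator ((\<phi> ^^ n) ` A) x - indicator B' x\<bar> \<partial>M)"
      by (intro integral_cong_AE) (use B B' img in \<open>auto simp: indicator_def\<close>)
    also have "\<dots> = measure M (((\<phi> ^^ n) ` A - B') \<union> (B' - (\<phi> ^^ n) ` A))"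
      using img B' by (rule integral_indicator_sym_diff)
    finally show ?thesis .
  qed
  with lim show "\<exists>A'\<in>Sigma_inv M \<phi>. measure M ((A - A') \<union> (A' - A)) = 0"
    using B' by (intro ae_invariant_of_indicator_L1_convergent[OF B A, of "indicator B'"]) auto
qed

section \<open>Convergence of the images \<open>\<phi>\<^sup>n(A)\<close>\<close>

text \<open>The density \<open>h = E(1\<^sub>D | \<Sigma>\<^sub>i\<^sub>n\<^sub>v)\<close> is positive a.e.\ on \<open>D\<close>, while \<open>P\<^sup>j 1\<^sub>D\<close> vanishes on
  \<open>D - \<phi>\<^sup>j(D)\<close>; so if \<open>P\<^sup>j 1\<^sub>D \<rightarrow> h\<close>, the sets \<open>D - \<phi>\<^sup>j(D)\<close> must shrink.\<close>
lemma measure_Diff_image_funpow_tendsto_0: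
  assumes lim: "\<And>f. integrable M f \<Longrightarrow>
      conv_L1 M (\<lambda>n. (P ^^ n) f) (real_cond_exp M invariant_algebra f)"
    and D: "D \<in> sets M"
  shows "(\<lambda>j. measure M (D - (\<phi> ^^ j) ` D)) \<longlonglongrightarrow> 0"
proof -
  have D_int: "integrable M (indicator D :: 'a \<Rightarrow> real)" using D by auto
  define h where "h = real_cond_exp M invariant_algebra (indicator D)"
  have h_int: "integrable M h" unfolding h_def using invariant.real_cond_exp_int(1)[OF D_int] .
  have h_nonneg: "AE x in M. 0 \<le> h x"
    unfolding h_def by (rule invariant.real_cond_exp_pos) (use D in \<open>auto simp: indicator_def\<close>)
  have pos: "AE x in M. x \<in> D \<longrightarrow> 0 < h x"
    unfolding h_def using AE_real_cond_exp_indicator_pos[OF subalgebra_invariant_algebra D] .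
  define C where "C j = D - (\<phi> ^^ j) ` D" for j
  have C: "C j \<in> sets M" "C j \<subseteq> D" for j unfolding C_def using sets_image_funpow[OF D] D by auto
  have upper: "(\<integral>x\<in>C j. h x \<partial>M) \<le> (\<integral>x. \<bar>(P ^^ j) (indicator D) x - h x\<bar> \<partial>M)" for j
  proof -
    have P_int: "integrable M ((P ^^ j) (indicator D))" using integrable_funpow_P[OF D_int] .
    have "(\<phi> ^^ j) -` C j \<inter> space M \<inter> D = {}" unfolding C_def by auto
    moreover have "(\<phi> ^^ j) -` C j \<inter> space M \<in> sets M" using C by measurable
    ultimately have "(\<integral>x\<in>C j. (P ^^ j) (indicator D) x \<partial>M) = 0"
      using set_integral_funpow_P[OF D_int C(1)] set_integral_indicator_real[OF _ D] by simp
    then have "(\<integral>x\<in>C j. h x \<partial>M) = (\<integral>x. indicator (C j) x * (h x - (P ^^ j) (indicator D) x) \<partial>M)"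
      using C h_int P_int
      by (simp add: set_lebesgue_integral_def right_diff_distrib integrable_indicator_mult_real)
    also have "\<dots> \<le> (\<integral>x. \<bar>(P ^^ j) (indicator D) x - h x\<bar> \<partial>M)"
      using C h_int P_int
      by (intro integral_mono integrable_indicator_mult_real) (auto split: split_indicator)
    finally show ?thesis .
  qed
  have lower: "0 \<le> (\<integral>x\<in>C j. h x \<partial>M)" for j
  proof -
    have "AE x in M. 0 \<le> indicator (C j) x * h x"
      using h_nonneg by eventually_elim (simp add: indicator_def)
    then show ?thesis unfolding set_lebesgue_integral_def real_scaleR_def by (rule integral_nonneg_AE)
  qed
  have "(\<lambda>j. \<integral>x\<in>C j. h x \<partial>M) \<longlonglongrightarrow> 0"
  proof (rule real_tendsto_sandwich)
    show "\<forall>\<^sub>F j in sequentially. 0 \<le> (\<integral>x\<in>C j. h x \<partial>M)" using lower by simp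
    show "\<forall>\<^sub>F j in sequentially. (\<integral>x\<in>C j. h x \<partial>M)
        \<le> (\<integral>x. \<bar>(P ^^ j) (indicator D) x - h x\<bar> \<partial>M)" using upper by simp
    show "(\<lambda>j. \<integral>x. \<bar>(P ^^ j) (indicator D) x - h x\<bar> \<partial>M) \<longlonglongrightarrow> 0"
      using lim[OF D_int] unfolding h_def conv_L1_def by blast
  qed simp
  then have "(\<lambda>j. measure M (C j)) \<longlonglongrightarrow> 0"
    by (rule measure_tendsto_0_of_set_integral_tendsto_0[of h D C, OF h_int D pos C])
  then show ?thesis unfolding C_def .
qed

lemma Union_vimage_image_funpow_invariant:
  "\<phi> -` (\<Union>m k. (\<phi> ^^ m) -` ((\<phi> ^^ k) ` A) \<inter> space M) \<inter> space M
    = (\<Union>m k. (\<phi> ^^ m) -` ((\<phi> ^^ k) ` A) \<inter> space M)" (is "_ = ?G")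
proof (intro set_eqI iffI)
  fix x assume "x \<in> \<phi> -` ?G \<inter> space M"
  then obtain m k where "x \<in> space M" "(\<phi> ^^ m) (\<phi> x) \<in> (\<phi> ^^ k) ` A" by auto
  then have "x \<in> (\<phi> ^^ Suc m) -` ((\<phi> ^^ k) ` A) \<inter> space M"
    by (simp add: funpow_Suc_right del: funpow.simps)
  then show "x \<in> ?G" by blast
next
  fix x assume "x \<in> ?G"
  then obtain m k where x: "x \<in> space M" and xmk: "(\<phi> ^^ m) x \<in> (\<phi> ^^ k) ` A" by auto
  have "\<phi> x \<in> ?G"
  proof (cases m)
    case 0
    then have "\<phi> x \<in> (\<phi> ^^ Suc k) ` A" using xmk by (auto simp: image_iff)
    then have "\<phi> x \<in> (\<phi> ^^ 0) -` ((\<phi> ^^ Suc k) ` A) \<inter> space M"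
      using measurable_space[OF measurable_phi x] by simp
    then show ?thesis by blast
  next
    case (Suc m')
    then have "(\<phi> ^^ m') (\<phi> x) \<in> (\<phi> ^^ k) ` A"
      using xmk by (simp add: funpow_Suc_right del: funpow.simps)
    then have "\<phi> x \<in> (\<phi> ^^ m') -` ((\<phi> ^^ k) ` A) \<inter> space M"
      using measurable_space[OF measurable_phi x] by simp
    then show ?thesis by blast
  qed
  then show "x \<in> \<phi> -` ?G \<inter> space M" using x by auto
qed

lemma Union_vimage_image_funpow_subset:
  assumes AB: "A \<subseteq> B" and B_inv: "\<phi> -` B \<inter> space M = B"
  shows "(\<Union>m k. (\<phi> ^^ m) -` ((\<phi> ^^ k) ` A) \<inter> space M) \<subseteq> B"
proof -
  have forward: "\<phi> x \<in> B" if "x \<in> B" for x using B_inv that by blast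
  have images: "(\<phi> ^^ k) ` A \<subseteq> B" for k
    by (induction k) (use AB forward in auto)
  have "(\<phi> ^^ m) -` ((\<phi> ^^ k) ` A) \<inter> space M \<subseteq> B" for m k
  proof (induction m)
    case 0
    then show ?case using images by auto
  next
    case (Suc m)
    show ?case
    proof
      fix x assume "x \<in> (\<phi> ^^ Suc m) -` ((\<phi> ^^ k) ` A) \<inter> space M"
      then have x: "x \<in> space M" and "\<phi> x \<in> (\<phi> ^^ m) -` ((\<phi> ^^ k) ` A) \<inter> space M"
        using measurable_space[OF measurable_phi]
        by (auto simp: funpow_Suc_right simp del: funpow.simps)
      then have "\<phi> x \<in> B" using Suc by auto
      then show "x \<in> B" using x B_inv by blast
    qed
  qed
  then show ?thesis by blast
qed

lemma min_inv_superset_eq_Union: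
  assumes A: "A \<subseteq> space M"
  shows "min_inv_superset M \<phi> A = (\<Union>m k. (\<phi> ^^ m) -` ((\<phi> ^^ k) ` A) \<inter> space M)"
    (is "_ = ?G")
proof
  have "?G \<subseteq> space M" by auto
  moreover have "A \<subseteq> ?G" using A by (auto intro!: exI[of _ 0])
  ultimately show "min_inv_superset M \<phi> A \<subseteq> ?G"
    unfolding min_inv_superset_def using Union_vimage_image_funpow_invariant[of A]
    by (intro Inter_lower) blast
  show "?G \<subseteq> min_inv_superset M \<phi> A"
    unfolding min_inv_superset_def
  proof (rule Inter_greatest)
    fix B assume "B \<in> {B. B \<subseteq> space M \<and> A \<subseteq> B \<and> \<phi> -` B \<inter> space M = B}"
    then show "?G \<subseteq> B" by (intro Union_vimage_image_funpow_subset) auto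
  qed
qed

text \<open>For \<open>k \<le> n\<close>, \<open>\<phi>\<^sup>n\<^sup>-\<^sup>k\<^sup>+\<^sup>m\<close> maps \<open>\<phi>\<^sup>-\<^sup>m(\<phi>\<^sup>k(A))\<close> into \<open>\<phi>\<^sup>n(A)\<close>.\<close>
lemma measure_vimage_image_Diff_image_tendsto_0:
  assumes lim: "\<And>f. integrable M f \<Longrightarrow>
      conv_L1 M (\<lambda>n. (P ^^ n) f) (real_cond_exp M invariant_algebra f)"
    and A: "A \<in> sets M"
  shows "(\<lambda>n. measure M ((\<phi> ^^ m) -` ((\<phi> ^^ k) ` A) \<inter> space M - (\<phi> ^^ n) ` A)) \<longlonglongrightarrow> 0"
proof -
  define D where "D = (\<phi> ^^ m) -` ((\<phi> ^^ k) ` A) \<inter> space M"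
  have D_sets: "D \<in> sets M" unfolding D_def using sets_image_funpow[OF A, of k] by measurable
  have "(\<phi> ^^ (n - k + m)) ` D \<subseteq> (\<phi> ^^ n) ` A" if "k \<le> n" for n
  proof
    fix y assume "y \<in> (\<phi> ^^ (n - k + m)) ` D"
    then obtain x a where y: "y = (\<phi> ^^ (n - k + m)) x" and a: "a \<in> A" "(\<phi> ^^ m) x = (\<phi> ^^ k) a"
      unfolding D_def by auto
    then have "y = (\<phi> ^^ (n - k)) ((\<phi> ^^ k) a)" by (simp add: funpow_add)
    also have "\<dots> = (\<phi> ^^ (n - k + k)) a" by (simp add: funpow_add)
    also have "\<dots> = (\<phi> ^^ n) a" using that by simp
    finally show "y \<in> (\<phi> ^^ n) ` A" using a by auto
  qed
  then have "measure M (D - (\<phi> ^^ n) ` A) \<le> measure M (D - (\<phi> ^^ (n - k + m)) ` D)" if "k \<le> n" for n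
    using that D_sets sets_image_funpow[OF A] sets_image_funpow[OF D_sets]
    by (intro finite_measure_mono) auto
  then have bound: "\<forall>\<^sub>F n in sequentially. measure M (D - (\<phi> ^^ n) ` A) \<le> measure M (D - (\<phi> ^^ (n - k + m)) ` D)"
    by (rule eventually_sequentiallyI)
  have "filterlim (\<lambda>n. n - k + m) sequentially sequentially"
    using filterlim_compose[OF filterlim_add_const_nat_at_top filterlim_minus_const_nat_at_top] .
  with measure_Diff_image_funpow_tendsto_0[OF lim D_sets]
  have "(\<lambda>n. measure M (D - (\<phi> ^^ (n - k + m)) ` D)) \<longlonglongrightarrow> 0"
    by (rule filterlim_compose)
  then show ?thesis unfolding D_def[symmetric]
    by (rule real_tendsto_sandwich[OF always_eventually[OF allI[OF measure_nonneg]] bound tendsto_const])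
qed

lemma conv_measure_algebra_image_min_inv_superset:
  assumes lim: "\<And>f. integrable M f \<Longrightarrow>
      conv_L1 M (\<lambda>n. (P ^^ n) f) (real_cond_exp M invariant_algebra f)"
    and A: "A \<in> sets M"
  shows "conv_measure_algebra M (\<lambda>n. (\<phi> ^^ n) ` A) (min_inv_superset M \<phi> A)"
proof -
  define D where "D m k = (\<phi> ^^ m) -` ((\<phi> ^^ k) ` A) \<inter> space M" for m k
  have D_sets: "D m k \<in> sets M" for m k unfolding D_def using sets_image_funpow[OF A, of k] by measurable
  have A_space: "A \<subseteq> space M" using sets.sets_into_space[OF A] .
  have G: "min_inv_superset M \<phi> A = (\<Union>i. case_prod D (prod_decode i))"
    unfolding min_inv_superset_eq_Union[OF A_space] D_def[symmetric] by (rule Union_Union_prod_decode)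
  have image_sub: "(\<phi> ^^ n) ` A \<subseteq> min_inv_superset M \<phi> A" for n
  proof -
    have "(\<phi> ^^ n) ` A \<subseteq> D 0 n" unfolding D_def using A_space funpow_in_space by auto
    also have "\<dots> \<subseteq> (\<Union>k. D 0 k)" by (rule UN_upper) simp
    also have "\<dots> \<subseteq> (\<Union>m k. D m k)" by (rule UN_upper) simp
    finally show ?thesis unfolding min_inv_superset_eq_Union[OF A_space] D_def .
  qed
  have "(\<lambda>n. measure M ((\<Union>i. case_prod D (prod_decode i)) - (\<phi> ^^ n) ` A)) \<longlonglongrightarrow> 0"
    using D_sets sets_image_funpow[OF A] measure_vimage_image_Diff_image_tendsto_0[OF lim A]
    by (intro measure_Diff_Union_tendsto_0) (auto split: prod.split simp: D_def)
  moreover have "((\<phi> ^^ n) ` A - min_inv_superset M \<phi> A) \<union> (min_inv_superset M \<phi> A - (\<phi> ^^ n) ` A)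
      = min_inv_superset M \<phi> A - (\<phi> ^^ n) ` A" for n
    using image_sub[of n] by auto
  moreover have "min_inv_superset M \<phi> A \<in> sets M"
    unfolding G using D_sets by (intro sets.countable_UN) (auto split: prod.split)
  ultimately show ?thesis unfolding conv_measure_algebra_def G[symmetric] by simp
qed

end

theorem theorem1p1:
  fixes M :: "'a measure" and \<phi> :: "'a \<Rightarrow> 'a" and P :: "('a \<Rightarrow> real) \<Rightarrow> ('a \<Rightarrow> real)"
  assumes "mpds M \<phi>" and "bimeasurable M \<phi>" and "perron_frobenius M \<phi> P"
  shows "((\<forall>A\<in>sets M. \<exists>B. conv_measure_algebra M (\<lambda>n. (\<phi> ^^ n) ` A) B)
          \<longleftrightarrow> (\<forall>f. integrable M f \<longrightarrow> (\<exists>g. conv_L1 M (\<lambda>n. (P ^^ n) f) g)))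
       \<and> ((\<forall>f. integrable M f \<longrightarrow> (\<exists>g. conv_L1 M (\<lambda>n. (P ^^ n) f) g))
          \<longleftrightarrow> completion_within M (Sigma_infty M \<phi>) = completion_within M (Sigma_inv M \<phi>))
       \<and> ((\<forall>A\<in>sets M. \<exists>B. conv_measure_algebra M (\<lambda>n. (\<phi> ^^ n) ` A) B) \<longrightarrow>
            (\<forall>f. integrable M f \<longrightarrow>
               conv_L1 M (\<lambda>n. (P ^^ n) f) (real_cond_exp M (sigma (space M) (Sigma_inv M \<phi>)) f))
          \<and> (\<forall>A\<in>sets M. conv_measure_algebra M (\<lambda>n. (\<phi> ^^ n) ` A) (min_inv_superset M \<phi> A)))"
proof -
  interpret perron_frobenius_system M \<phi> P using assms by (rule perron_frobenius_system.intro)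
  let ?i = "\<forall>A\<in>sets M. \<exists>B. conv_measure_algebra M (\<lambda>n. (\<phi> ^^ n) ` A) B"
  let ?ii = "\<forall>f. integrable M f \<longrightarrow> (\<exists>g. conv_L1 M (\<lambda>n. (P ^^ n) f) g)"
  let ?iii = "completion_within M (Sigma_infty M \<phi>) = completion_within M (Sigma_inv M \<phi>)"
  let ?limit = "\<forall>f. integrable M f \<longrightarrow> conv_L1 M (\<lambda>n. (P ^^ n) f) (real_cond_exp M invariant_algebra f)"
  let ?star = "\<forall>A\<in>sets M. conv_measure_algebra M (\<lambda>n. (\<phi> ^^ n) ` A) (min_inv_superset M \<phi> A)"
  have "?i \<Longrightarrow> ?iii" by (rule completions_eq_of_image_convergent)
  moreover have "?ii \<Longrightarrow> ?iii" by (rule completions_eq_of_funpow_P_convergent)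
  moreover have "?iii \<Longrightarrow> ?limit" using conv_L1_funpow_P_real_cond_exp by blast
  moreover have "?limit \<Longrightarrow> ?star" using conv_measure_algebra_image_min_inv_superset by blast
  moreover have "?limit \<Longrightarrow> ?ii" and "?star \<Longrightarrow> ?i" by blast+
  ultimately show ?thesis by blast
qed

end
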